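(* Let $G=(V,E)$ be a directed graph on $V=\{1,\dots,n\}$ in which every vertex has a self-loop and which is strongly connected; let $W$, $\pi$, $\sigma_W$, the norms $\|\cdot\|_\pi$, $\|\cdot\|_{\pi\otimes 1_d}$, the functions $f_i$, $f=\frac1n\sum_i f_i$, the constants $L,\beta,\gamma,\delta$, the minimizer $w_*$, and the gradient-push iterates $w(t),y(t),z(t)$ with stepsize $\alpha>0$ be as described in the context, and set $A_t=\|\bar w(t)-w_*\|$, $B_t=\|w(t)-n\pi\otimes\bar w(t)\|_{\pi\otimes 1_d}$. Assume (F1) and (F2). Let $b=\frac{n\gamma}{4L\delta}$ and assume $$\alpha\le \frac{2}{L+\beta}\quad\text{and}\quad \alpha<\frac{b(1-\sigma_W)}{L\sigma_W\big(\delta b+\delta\|1_n-n\pi\|_\pi+\sqrt{\sum_{j=1}^n 1/\pi_j}\big)}.$$ Then $\sup_{t\ge0}A_t<\infty$ and $\sup_{t\ge0}B_t<\infty$. More precisely, let $t_0\in\mathbb N$ be such that $(L\delta/n)\|1_n-n\pi\|_\pi\sigma_W^{t_0}\le\gamma/2$, let $\mathbf D_2=L\delta\|1_n-n\pi\|_\pi\|w_*\|+\|\nabla F(1_n\otimes w_* )\|_{\pi\otimes 1_d}$, and define $$R=\max\Big\{A_{t_0},\ \frac{B_{t_0}}{b},\ 2\|w_*\|,\ \frac{\sigma_W\alpha\mathbf D_2}{b(1-\sigma_W)-\alpha L\sigma_W\big(\delta b+\delta\|1_n-n\pi\|_\pi+\sqrt{\sum_{j=1}^n 1/\pi_j}\big)}\Big\}.$$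 Then $A_t\le R$ and $B_t\le bR$ for all $t\ge t_0$.
   Context: Graph and weights: $G=(V,E)$ directed, $V=\{1,\dots,n\}$, $(i,i)\in E$ for all $i$, and $G$ strongly connected. Let $d_j=|\{i:(j,i)\in E\}|$ and $W_{ij}=1/d_j$ if $(j,i)\in E$, $W_{ij}=0$ otherwise ($W$ is column stochastic and primitive). Let $\pi\in\mathbb R^n$ be the vector with $W\pi=\pi$, $\pi_i>0$, $\sum_i\pi_i=1$, and $W^\infty=\pi 1_n^\top$. For $x\in\mathbb R^n$, $\|x\|_\pi=(\sum_i x_i^2/\pi_i)^{1/2}$, $|||A|||_\pi$ is the induced operator norm, and $\sigma_W:=|||W-W^\infty|||_\pi$ (known to satisfy $\sigma_W<1$). For $x=\mathrm{col}(x_1,\dots,x_n)\in\mathbb R^{nd}$, $x_i\in\mathbb R^d$, $\|x\|_{\pi\otimes1_d}=(\sum_i\|x_i\|^2/\pi_i)^{1/2}$; $\|\cdot\|$ is the Euclidean norm. For $v\in\mathbb R^n$, $u\in\mathbb R^d$, $v\otimes u=\mathrm{col}(v_1u,\dots,v_nu)$. Costs: $f_i:\mathbb R^d\to\mathbb R$, $f=\frac1n\sum_{i=1}^n f_i$. (F1): each $\nabla f_i$ is Lipschitz with constant $L_i>0$; $L:=\max_i L_i$. (F2): $f$ is $\beta$-strongly convex, $\beta>0$. $w_*$ is the unique minimizer of $f$. $\gamma=\frac{\beta L}{\beta+L}$. $\nabla F(x)=\mathrm{col}(\nabla f_1(x_1),\dots,\nabla f_n(x_n))$. Gradient-push algorithm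 with stepsize $\alpha>0$: given $w(0)\in\mathbb R^{nd}$ and $y(0)=1_n$, for $t\ge0$: $z_i(t)=w_i(t)/y_i(t)$, $x_i(t)=w_i(t)-\alpha\nabla f_i(z_i(t))$, $w_i(t+1)=\sum_j W_{ij}x_j(t)$, $y_i(t+1)=\sum_jW_{ij}y_j(t)$ (all $y_i(t)>0$). $\bar w(t)=\frac1n\sum_i w_i(t)$. $\delta:=\sup_{t\ge0}\max_i 1/y_i(t)$ (finite). *)

theory Defs
  imports "HOL-Analysis.Analysis"
begin

text \<open>Vertices are 1..n; vectors in R^n are functions nat => real (only entries 1..n matter);
  stacked vectors in R^(nd) are functions nat => 'a with 'a a Euclidean space (R^d).\<close>

definition out_deg :: "(nat \<times> nat) set \<Rightarrow> nat \<Rightarrow> nat" where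
  "out_deg E j = card {i. (j, i) \<in> E}"

definition Wmat :: "(nat \<times> nat) set \<Rightarrow> nat \<Rightarrow> nat \<Rightarrow> real" where
  "Wmat E i j = (if (j, i) \<in> E then 1 / real (out_deg E j) else 0)"

definition strongly_connected_on :: "nat \<Rightarrow> (nat \<times> nat) set \<Rightarrow> bool" where
  "strongly_connected_on n E \<longleftrightarrow> (\<forall>i\<in>{1..n}. \<forall>j\<in>{1..n}. (i, j) \<in> E\<^sup>*)"

definition pi_norm :: "nat \<Rightarrow> (nat \<Rightarrow> real) \<Rightarrow> (nat \<Rightarrow> real) \<Rightarrow> real" where
  "pi_norm n p x = sqrt (\<Sum>i\<in>{1..n}. (x i)\<^sup>2 / p i)"

definition pi_block_norm :: "nat \<Rightarrow> (nat \<Rightarrow> real) \<Rightarrow> (nat \<Rightarrow> 'a::real_normed_vector) \<Rightarrow> real" where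
  "pi_block_norm n p x = sqrt (\<Sum>i\<in>{1..n}. (norm (x i))\<^sup>2 / p i)"

definition mat_vec :: "nat \<Rightarrow> (nat \<Rightarrow> nat \<Rightarrow> real) \<Rightarrow> (nat \<Rightarrow> real) \<Rightarrow> (nat \<Rightarrow> real)" where
  "mat_vec n M x = (\<lambda>i. \<Sum>j\<in>{1..n}. M i j * x j)"

definition pi_op_norm :: "nat \<Rightarrow> (nat \<Rightarrow> real) \<Rightarrow> (nat \<Rightarrow> nat \<Rightarrow> real) \<Rightarrow> real" where
  "pi_op_norm n p M = (SUP x\<in>{x. pi_norm n p x \<noteq> 0}. pi_norm n p (mat_vec n M x) / pi_norm n p x)"

text \<open>sigma_W = ||| W - W^infty |||_pi with W^infty = pi 1^T.\<close>
definition sigmaW :: "nat \<Rightarrow> (nat \<times> nat) set \<Rightarrow> (nat \<Rightarrow> real) \<Rightarrow> real" where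
  "sigmaW n E p = pi_op_norm n p (\<lambda>i j. Wmat E i j - p i)"

definition strongly_convex :: "real \<Rightarrow> ('a::real_normed_vector \<Rightarrow> real) \<Rightarrow> bool" where
  "strongly_convex \<beta> f \<longleftrightarrow> (\<forall>x y. \<forall>t::real. 0 \<le> t \<and> t \<le> 1 \<longrightarrow>
      f (t *\<^sub>R x + (1 - t) *\<^sub>R y) \<le> t * f x + (1 - t) * f y - \<beta> / 2 * t * (1 - t) * (norm (x - y))\<^sup>2)"

end

theory Submission
  imports Defs
begin

(*
  The proof tracks two scalar errors, the distance A of the network average from the
  minimiser and the consensus error B.  The average performs an inexact gradient step
  for f: the exact step contracts by 1 - alpha gamma, because the gradient of an
  L-smooth, beta-strongly convex function is co-coercive, and the inexactness (gradients
  evaluated at the de-biased estimates z_i rather than at the average) is controlled by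
  B and by the distance of the push-sum weights y(t) from n pi, which decays like
  sigma_W^t.  Mixing contracts the consensus error by sigma_W up to the size of the
  gradients, which is affine in A and B.  Once the decaying term is below gamma/2, the
  pair (A, B) obeys a monotone affine recursion for which, under the step-size condition,
  the box A <= R, B <= b R is invariant.
*)

section \<open>Smooth strongly convex functions\<close>

lemma has_real_derivative_along_line:
  fixes f :: "'a::real_inner \<Rightarrow> real"
  assumes "\<And>x. (f has_derivative (\<lambda>h. G x \<bullet> h)) (at x)"
  shows "((\<lambda>t. f (x + t *\<^sub>R v)) has_real_derivative (G (x + t *\<^sub>R v) \<bullet> v)) (at t)"
proof -
  have "((\<lambda>t. x + t *\<^sub>R v) has_derivative (\<lambda>s. s *\<^sub>R v)) (at t)"
    by (auto intro!: derivative_eq_intros)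
  from has_derivative_compose[OF this assms]
  show ?thesis
    by (simp add: has_field_derivative_def mult.commute[of _ "G (x + t *\<^sub>R v) \<bullet> v"])
qed

lemma lipschitz_gradient_upper_bound:
  fixes f :: "'a::real_inner \<Rightarrow> real"
  assumes deriv: "\<And>x. (f has_derivative (\<lambda>h. G x \<bullet> h)) (at x)"
    and lip: "\<And>x y. norm (G x - G y) \<le> L * norm (x - y)"
  shows "f y \<le> f x + G x \<bullet> (y - x) + L / 2 * (norm (y - x))\<^sup>2"
proof -
  define v where "v = y - x"
  define h where "h t = f (x + t *\<^sub>R v) - t * (G x \<bullet> v) - L / 2 * t\<^sup>2 * (norm v)\<^sup>2" for t
  have h': "(h has_real_derivative (G (x + t *\<^sub>R v) \<bullet> v - G x \<bullet> v - L * t * (norm v)\<^sup>2)) (at t)" for t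
    unfolding h_def
    by (rule has_real_derivative_along_line[OF deriv] derivative_eq_intros refl | simp)+
  obtain s where s: "0 < s" "s < 1"
    and mvt: "h 1 - h 0 = G (x + s *\<^sub>R v) \<bullet> v - G x \<bullet> v - L * s * (norm v)\<^sup>2"
    using MVT2[of 0 1 h, OF _ h'] by auto
  have "G (x + s *\<^sub>R v) \<bullet> v - G x \<bullet> v \<le> norm (G (x + s *\<^sub>R v) - G x) * norm v"
    by (metis inner_diff_left norm_cauchy_schwarz)
  also have "\<dots> \<le> L * s * (norm v)\<^sup>2"
    using mult_right_mono[OF lip[of "x + s *\<^sub>R v" x] norm_ge_zero[of v]] s
    by (simp add: power2_eq_square mult.assoc)
  finally have "h 1 \<le> h 0" using mvt by simp
  then show ?thesis unfolding h_def v_def by (simp add: algebra_simps)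
qed

lemma strongly_convex_gradient_lower_bound:
  fixes f :: "'a::real_inner \<Rightarrow> real"
  assumes deriv: "\<And>x. (f has_derivative (\<lambda>h. G x \<bullet> h)) (at x)"
    and sc: "strongly_convex \<beta> f"
  shows "f y + G y \<bullet> (x - y) + \<beta> / 2 * (norm (x - y))\<^sup>2 \<le> f x"
proof -
  define v where "v = x - y"
  define k where "k t = f (y + t *\<^sub>R v)" for t
  define q where "q t = f x - f y - \<beta> / 2 * (1 - t) * (norm v)\<^sup>2" for t
  have "(k has_real_derivative (G y \<bullet> v)) (at 0 within {0<..})"
    using has_real_derivative_along_line[OF deriv, of y v 0] unfolding k_def
    by (simp add: has_field_derivative_at_within)
  then have slope: "((\<lambda>t. (k t - k 0) / (t - 0)) \<longlongrightarrow> G y \<bullet> v) (at_right 0)"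
    by (simp add: has_field_derivative_iff)
  have "(q \<longlongrightarrow> q 0) (at_right 0)"
    unfolding q_def by (intro tendsto_intros)
  moreover have "eventually (\<lambda>t. (k t - k 0) / (t - 0) \<le> q t) (at_right 0)"
  proof -
    have "eventually (\<lambda>t::real. 0 < t \<and> t < 1) (at_right 0)"
      unfolding eventually_at_right_field by (intro exI[of _ 1]) auto
    then show ?thesis
    proof eventually_elim
      case (elim t)
      have "y + t *\<^sub>R v = t *\<^sub>R x + (1 - t) *\<^sub>R y"
        unfolding v_def by (simp add: algebra_simps)
      then have "k t \<le> t * f x + (1 - t) * f y - \<beta> / 2 * t * (1 - t) * (norm v)\<^sup>2"
        using sc elim unfolding strongly_convex_def k_def v_def by auto
      then have "k t - k 0 \<le> t * q t"
        unfolding k_def q_def by (simp add: algebra_simps)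
      then show ?case
        using elim by (simp add: divide_simps mult.commute)
    qed
  qed
  ultimately have "G y \<bullet> v \<le> q 0"
    by (intro tendsto_le[OF _ _ slope]) simp_all
  then show ?thesis unfolding q_def v_def by simp
qed

lemma le_of_forall_pos_quadratic_bound:
  fixes q M K :: real
  assumes bound: "\<And>s. s > 0 \<Longrightarrow> s * q - M * s\<^sup>2 / 2 * q \<le> K"
    and "M \<ge> 0" and "q \<ge> 0"
  shows "q \<le> 2 * M * K"
proof (cases "M > 0")
  case True
  have "1 / M * q - M * (1 / M)\<^sup>2 / 2 * q \<le> K"
    using bound[of "1 / M"] True by simp
  with True show ?thesis
    by (simp add: power2_eq_square field_simps)
next
  case False
  with assms have M: "M = 0" by simp
  have "q = 0"
  proof (rule ccontr)
    assume "q \<noteq> 0"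
    with assms have "q > 0" by simp
    moreover from this have "K \<ge> 0"
      using bound[of 1] M by simp
    ultimately show False
      using bound[of "(K + 1) / q"] M by simp
  qed
  with M show ?thesis by simp
qed

text \<open>Test the upper bound at \<open>y\<close> and the lower bound at \<open>x\<close> against the point
  \<open>y - s u\<close>, \<open>u = G y - G x - \<beta> (y - x)\<close>, and optimise over \<open>s > 0\<close>.\<close>

lemma smooth_strongly_convex_bregman_bound:
  fixes f :: "'a::real_inner \<Rightarrow> real"
  assumes UB: "\<And>x y. f y \<le> f x + G x \<bullet> (y - x) + L / 2 * (norm (y - x))\<^sup>2"
    and LB: "\<And>x y. f y + G y \<bullet> (x - y) + \<beta> / 2 * (norm (x - y))\<^sup>2 \<le> f x"
    and "\<beta> \<le> L"
  shows "(norm (G y - G x - \<beta> *\<^sub>R (y - x)))\<^sup>2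
    \<le> 2 * (L - \<beta>) * (f y - f x - G x \<bullet> (y - x) - \<beta> / 2 * (norm (y - x))\<^sup>2)"
proof -
  define u where "u = G y - G x - \<beta> *\<^sub>R (y - x)"
  have "s * (norm u)\<^sup>2 - (L - \<beta>) * s\<^sup>2 / 2 * (norm u)\<^sup>2
      \<le> f y - f x - G x \<bullet> (y - x) - \<beta> / 2 * (norm (y - x))\<^sup>2" for s
  proof -
    define z where "z = y - s *\<^sub>R u"
    have lower: "f x + G x \<bullet> (z - x) + \<beta> / 2 * (norm (z - x))\<^sup>2 \<le> f z"
      using LB[where x = z and y = x] .
    have upper: "f z \<le> f y + G y \<bullet> (z - y) + L / 2 * (norm (z - y))\<^sup>2"
      using UB[where x = y and y = z] .
    have zx: "z - x = (y - x) - s *\<^sub>R u" and zy: "z - y = - (s *\<^sub>R u)"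
      unfolding z_def by simp_all
    have Gy: "G y = G x + u + \<beta> *\<^sub>R (y - x)"
      unfolding u_def by simp
    have nzx: "(norm (z - x))\<^sup>2 = (norm (y - x))\<^sup>2 - 2 * s * ((y - x) \<bullet> u) + s\<^sup>2 * (norm u)\<^sup>2"
      unfolding zx power2_norm_eq_inner
      by (simp add: inner_simps algebra_simps power2_eq_square inner_commute)
    have nzy: "(norm (z - y))\<^sup>2 = s\<^sup>2 * (norm u)\<^sup>2"
      unfolding zy by (simp add: power_mult_distrib)
    have ix: "G x \<bullet> (z - x) = G x \<bullet> (y - x) - s * (G x \<bullet> u)"
      unfolding zx by (simp add: inner_simps)
    have iy: "G y \<bullet> (z - y) = - s * (G x \<bullet> u) - s * (norm u)\<^sup>2 - s * \<beta> * ((y - x) \<bullet> u)"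
      unfolding zy Gy by (simp add: inner_simps power2_norm_eq_inner algebra_simps)
    have "f x + G x \<bullet> (y - x) - s * (G x \<bullet> u)
          + \<beta> / 2 * ((norm (y - x))\<^sup>2 - 2 * s * ((y - x) \<bullet> u) + s\<^sup>2 * (norm u)\<^sup>2)
        \<le> f y - s * (G x \<bullet> u) - s * (norm u)\<^sup>2 - s * \<beta> * ((y - x) \<bullet> u) + L / 2 * (s\<^sup>2 * (norm u)\<^sup>2)"
      using lower upper unfolding nzx nzy ix iy by linarith
    then show ?thesis
      by (simp add: algebra_simps diff_divide_distrib)
  qed
  then show ?thesis
    unfolding u_def[symmetric] using assms(3) by (intro le_of_forall_pos_quadratic_bound) simp_all
qed

lemma strong_convexity_le_smoothness:
  fixes f :: "'a::euclidean_space \<Rightarrow> real"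
  assumes UB: "\<And>x y. f y \<le> f x + G x \<bullet> (y - x) + L / 2 * (norm (y - x))\<^sup>2"
    and LB: "\<And>x y. f y + G y \<bullet> (x - y) + \<beta> / 2 * (norm (x - y))\<^sup>2 \<le> f x"
  shows "\<beta> \<le> L"
proof -
  obtain v :: 'a where "v \<noteq> 0"
    using nonzero_Basis by blast
  moreover have "\<beta> / 2 * (norm v)\<^sup>2 \<le> L / 2 * (norm v)\<^sup>2"
    using UB[where x = v and y = 0] LB[where x = 0 and y = v] by simp
  ultimately show ?thesis by simp
qed

lemma smooth_strongly_convex_cocoercive:
  fixes f :: "'a::euclidean_space \<Rightarrow> real"
  assumes UB: "\<And>x y. f y \<le> f x + G x \<bullet> (y - x) + L / 2 * (norm (y - x))\<^sup>2"
    and LB: "\<And>x y. f y + G y \<bullet> (x - y) + \<beta> / 2 * (norm (x - y))\<^sup>2 \<le> f x"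
  shows "(norm (G x - G y))\<^sup>2 + L * \<beta> * (norm (x - y))\<^sup>2 \<le> (L + \<beta>) * ((G x - G y) \<bullet> (x - y))"
proof -
  have \<beta>L: "\<beta> \<le> L" by (rule strong_convexity_le_smoothness[OF UB LB])
  define u where "u = G x - G y - \<beta> *\<^sub>R (x - y)"
  define D where "D x y = f y - f x - G x \<bullet> (y - x) - \<beta> / 2 * (norm (y - x))\<^sup>2" for x y
  have "(norm u)\<^sup>2 \<le> 2 * (L - \<beta>) * D y x"
    unfolding u_def D_def
    by (rule smooth_strongly_convex_bregman_bound[OF UB LB \<beta>L, where x = y and y = x])
  moreover have "(norm u)\<^sup>2 \<le> 2 * (L - \<beta>) * D x y"
  proof -
    have "G y - G x - \<beta> *\<^sub>R (y - x) = - u"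
      unfolding u_def by (simp add: algebra_simps)
    moreover have "(norm (G y - G x - \<beta> *\<^sub>R (y - x)))\<^sup>2 \<le> 2 * (L - \<beta>) * D x y"
      unfolding D_def by (rule smooth_strongly_convex_bregman_bound[OF UB LB \<beta>L])
    ultimately show ?thesis by simp
  qed
  ultimately have "2 * (norm u)\<^sup>2 \<le> 2 * (L - \<beta>) * (D x y + D y x)"
    by (simp add: distrib_left)
  moreover have "D x y + D y x = (G x - G y) \<bullet> (x - y) - \<beta> * (norm (x - y))\<^sup>2"
    unfolding D_def by (simp add: norm_minus_commute inner_diff_left inner_diff_right)
  moreover have "(norm u)\<^sup>2
      = (norm (G x - G y))\<^sup>2 - 2 * \<beta> * ((G x - G y) \<bullet> (x - y)) + \<beta>\<^sup>2 * (norm (x - y))\<^sup>2"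
    unfolding u_def power2_norm_eq_inner
    by (simp add: inner_diff_left inner_diff_right inner_commute power2_eq_square algebra_simps)
  ultimately show ?thesis
    by (simp add: algebra_simps power2_eq_square)
qed

lemma gradient_eq_zero_at_minimum:
  fixes f :: "'a::real_inner \<Rightarrow> real"
  assumes UB: "\<And>x y. f y \<le> f x + G x \<bullet> (y - x) + L / 2 * (norm (y - x))\<^sup>2"
    and "L > 0" and min: "\<And>x. f w \<le> f x"
  shows "G w = 0"
proof -
  have "f w \<le> f (w - (1 / L) *\<^sub>R G w)" by (rule min)
  also have "\<dots> \<le> f w - (norm (G w))\<^sup>2 / (2 * L)"
    using UB[where x = w and y = "w - (1 / L) *\<^sub>R G w"] \<open>L > 0\<close>
    by (simp add: power2_norm_eq_inner[symmetric] power_mult_distrib power2_eq_square field_simps)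
  finally have "(norm (G w))\<^sup>2 \<le> 0"
    using \<open>L > 0\<close> by (simp add: divide_le_0_iff)
  then show ?thesis by simp
qed

lemma step_size_mult_gamma_le_half:
  fixes \<alpha> \<beta> L :: real
  assumes "\<beta> > 0" and "L > 0" and "\<alpha> > 0" and "\<alpha> \<le> 2 / (L + \<beta>)"
  shows "\<alpha> * (\<beta> * L / (\<beta> + L)) \<le> 1 / 2"
proof -
  have "4 * (\<beta> * L) \<le> (L + \<beta>)\<^sup>2"
    using sum_power2_ge_zero[of "L - \<beta>" 0] by (simp add: power2_eq_square algebra_simps)
  then have "\<beta> * L / (\<beta> + L) \<le> (L + \<beta>) / 4"
    using assms by (simp add: field_simps power2_eq_square add.commute)
  then have "\<alpha> * (\<beta> * L / (\<beta> + L)) \<le> 2 / (L + \<beta>) * ((L + \<beta>) / 4)"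
    using assms by (intro mult_mono) auto
  also have "\<dots> = 1 / 2"
    using assms by (simp add: field_simps)
  finally show ?thesis .
qed

lemma cocoercive_step_sq_le:
  fixes a g :: "'a::real_inner"
  assumes co: "(norm g)\<^sup>2 + L * \<beta> * (norm a)\<^sup>2 \<le> (L + \<beta>) * (g \<bullet> a)"
    and "L + \<beta> > 0" and "\<alpha> > 0" and "\<alpha> \<le> 2 / (L + \<beta>)"
  shows "(norm (a - \<alpha> *\<^sub>R g))\<^sup>2 \<le> ((1 - \<alpha> * (\<beta> * L / (\<beta> + L))) * norm a)\<^sup>2"
proof -
  define \<gamma> where "\<gamma> = \<beta> * L / (\<beta> + L)"
  have "2 * \<alpha> * (((norm g)\<^sup>2 + L * \<beta> * (norm a)\<^sup>2) / (L + \<beta>)) \<le> 2 * \<alpha> * (g \<bullet> a)"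
    using co assms(2,3) by (intro mult_left_mono) (simp_all add: pos_divide_le_eq mult.commute)
  then have "(norm (a - \<alpha> *\<^sub>R g))\<^sup>2
      \<le> (norm a)\<^sup>2 - 2 * \<alpha> * (((norm g)\<^sup>2 + L * \<beta> * (norm a)\<^sup>2) / (L + \<beta>)) + \<alpha>\<^sup>2 * (norm g)\<^sup>2"
    unfolding power2_norm_eq_inner
    by (simp add: inner_diff_left inner_diff_right inner_commute power2_eq_square algebra_simps)
  also have "\<dots> = (1 - 2 * \<alpha> * \<gamma>) * (norm a)\<^sup>2 + \<alpha> * (\<alpha> - 2 / (L + \<beta>)) * (norm g)\<^sup>2"
  proof -
    have "\<And>K na ng :: real. K \<noteq> 0 \<Longrightarrow> na - 2 * \<alpha> * ((ng + L * \<beta> * na) / K) + \<alpha>\<^sup>2 * ng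
        = (1 - 2 * \<alpha> * (\<beta> * L / K)) * na + \<alpha> * (\<alpha> - 2 / K) * ng"
      by (simp add: field_simps power2_eq_square)
    then show ?thesis
      using assms(2) unfolding \<gamma>_def by (simp add: add.commute[of \<beta> L])
  qed
  also have "\<dots> \<le> (1 - \<alpha> * \<gamma>)\<^sup>2 * (norm a)\<^sup>2"
  proof -
    have "\<alpha> * (\<alpha> - 2 / (L + \<beta>)) * (norm g)\<^sup>2 \<le> 0"
      using assms(3,4) by (intro mult_nonpos_nonneg mult_nonneg_nonpos) simp_all
    moreover have "1 - 2 * \<alpha> * \<gamma> \<le> (1 - \<alpha> * \<gamma>)\<^sup>2"
      using zero_le_power2[of "\<alpha> * \<gamma>"] by (simp add: power2_eq_square algebra_simps)
    then have "(1 - 2 * \<alpha> * \<gamma>) * (norm a)\<^sup>2 \<le> (1 - \<alpha> * \<gamma>)\<^sup>2 * (norm a)\<^sup>2"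
      by (rule mult_right_mono) simp
    ultimately show ?thesis
      by linarith
  qed
  finally show ?thesis
    unfolding \<gamma>_def by (simp add: power_mult_distrib)
qed

lemma gradient_step_contraction:
  fixes f :: "'a::euclidean_space \<Rightarrow> real"
  assumes UB: "\<And>x y. f y \<le> f x + G x \<bullet> (y - x) + L / 2 * (norm (y - x))\<^sup>2"
    and LB: "\<And>x y. f y + G y \<bullet> (x - y) + \<beta> / 2 * (norm (x - y))\<^sup>2 \<le> f x"
    and "\<beta> > 0" and "\<alpha> > 0" and "\<alpha> \<le> 2 / (L + \<beta>)" and "G w = 0"
  shows "norm (x - \<alpha> *\<^sub>R G x - w) \<le> (1 - \<alpha> * (\<beta> * L / (\<beta> + L))) * norm (x - w)"
proof -
  have "\<beta> \<le> L"
    by (rule strong_convexity_le_smoothness[OF UB LB])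
  with \<open>\<beta> > 0\<close> have "L > 0" and "L + \<beta> > 0" by simp_all
  have "(norm (G x))\<^sup>2 + L * \<beta> * (norm (x - w))\<^sup>2 \<le> (L + \<beta>) * (G x \<bullet> (x - w))"
    using smooth_strongly_convex_cocoercive[OF UB LB, of x w] \<open>G w = 0\<close> by simp
  from cocoercive_step_sq_le[OF this \<open>L + \<beta> > 0\<close> assms(4,5)]
  have sq: "(norm (x - w - \<alpha> *\<^sub>R G x))\<^sup>2 \<le> ((1 - \<alpha> * (\<beta> * L / (\<beta> + L))) * norm (x - w))\<^sup>2" .
  have "0 \<le> 1 - \<alpha> * (\<beta> * L / (\<beta> + L))"
    using step_size_mult_gamma_le_half[OF \<open>\<beta> > 0\<close> \<open>L > 0\<close> assms(4,5)] by linarith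
  then have "norm (x - w - \<alpha> *\<^sub>R G x) \<le> (1 - \<alpha> * (\<beta> * L / (\<beta> + L))) * norm (x - w)"
    by (intro power2_le_imp_le[OF sq] mult_nonneg_nonneg) simp_all
  then show ?thesis
    by (simp add: algebra_simps)
qed

lemma average_gradient_step_contraction:
  fixes fs :: "nat \<Rightarrow> 'a::euclidean_space \<Rightarrow> real"
  assumes "n \<ge> 1"
    and deriv: "\<And>i x. i \<in> {1..n} \<Longrightarrow> (fs i has_derivative (\<lambda>h. g i x \<bullet> h)) (at x)"
    and lip: "\<And>i x x'. i \<in> {1..n} \<Longrightarrow> norm (g i x - g i x') \<le> L * norm (x - x')"
    and "L > 0" and "\<beta> > 0" and sc: "strongly_convex \<beta> (\<lambda>x. 1 / real n * (\<Sum>i\<in>{1..n}. fs i x))"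
    and min: "\<And>x. 1 / real n * (\<Sum>i\<in>{1..n}. fs i wstar) \<le> 1 / real n * (\<Sum>i\<in>{1..n}. fs i x)"
    and "\<alpha> > 0" and "\<alpha> \<le> 2 / (L + \<beta>)"
  shows "norm (x - \<alpha> *\<^sub>R ((1 / real n) *\<^sub>R (\<Sum>i\<in>{1..n}. g i x)) - wstar)
    \<le> (1 - \<alpha> * (\<beta> * L / (\<beta> + L))) * norm (x - wstar)"
proof -
  define f where "f x = 1 / real n * (\<Sum>i\<in>{1..n}. fs i x)" for x
  define G where "G x = (1 / real n) *\<^sub>R (\<Sum>i\<in>{1..n}. g i x)" for x
  have f': "(f has_derivative (\<lambda>h. G x \<bullet> h)) (at x)" for x
    unfolding f_def G_def inner_scaleR_left inner_sum_left
    by (intro has_derivative_mult_right has_derivative_sum deriv)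
  have "norm (G x - G x') \<le> L * norm (x - x')" for x x'
  proof -
    have "norm (G x - G x') = 1 / real n * norm (\<Sum>i\<in>{1..n}. g i x - g i x')"
      unfolding G_def by (simp add: sum_subtractf flip: scaleR_diff_right)
    also have "\<dots> \<le> 1 / real n * (\<Sum>i\<in>{1..n}. L * norm (x - x'))"
      by (intro mult_left_mono order_trans[OF norm_sum sum_mono] lip) auto
    also have "\<dots> = L * norm (x - x')"
      using \<open>n \<ge> 1\<close> by simp
    finally show ?thesis .
  qed
  note UB = lipschitz_gradient_upper_bound[OF f' this]
  note LB = strongly_convex_gradient_lower_bound[OF f' sc[folded f_def]]
  have "G wstar = 0"
    using gradient_eq_zero_at_minimum[OF UB \<open>L > 0\<close>] min unfolding f_def by blast
  from gradient_step_contraction[OF UB LB \<open>\<beta> > 0\<close> \<open>\<alpha> > 0\<close> \<open>\<alpha> \<le> 2 / (L + \<beta>)\<close> this]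
  show ?thesis unfolding G_def .
qed

lemma contraction_factor_nonneg:
  fixes F :: "'a::euclidean_space \<Rightarrow> 'b::real_normed_vector"
  assumes "\<And>x. norm (F x) \<le> \<kappa> * norm (x - w)"
  shows "\<kappa> \<ge> 0"
proof -
  obtain v :: 'a where "v \<noteq> 0"
    using nonzero_Basis by blast
  moreover have "0 \<le> \<kappa> * norm v"
    using order_trans[OF norm_ge_zero assms[of "w + v"]] by simp
  ultimately show ?thesis
    by (simp add: zero_le_mult_iff)
qed

section \<open>Weighted norms\<close>

lemma pi_block_norm_eq_pi_norm: "pi_block_norm n p u = pi_norm n p (\<lambda>i. norm (u i))"
  unfolding pi_block_norm_def pi_norm_def ..

lemma pi_norm_cong: "(\<And>i. i \<in> {1..n} \<Longrightarrow> x i = x' i) \<Longrightarrow> pi_norm n p x = pi_norm n p x'"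
  unfolding pi_norm_def by (intro arg_cong[where f = sqrt] sum.cong) auto

lemma pi_block_norm_cong:
  "(\<And>i. i \<in> {1..n} \<Longrightarrow> u i = u' i) \<Longrightarrow> pi_block_norm n p u = pi_block_norm n p u'"
  unfolding pi_block_norm_def by (intro arg_cong[where f = sqrt] sum.cong) auto

lemma pi_norm_abs: "pi_norm n p (\<lambda>i. \<bar>x i\<bar>) = pi_norm n p x"
  unfolding pi_norm_def by simp

locale pi_weights =
  fixes n :: nat and p :: "nat \<Rightarrow> real"
  assumes p_pos: "\<And>i. i \<in> {1..n} \<Longrightarrow> p i > 0"
begin

lemma p_nonneg: "i \<in> {1..n} \<Longrightarrow> p i \<ge> 0"
  using p_pos less_imp_le by blast

lemma pi_norm_eq_L2_set: "pi_norm n p x = L2_set (\<lambda>i. x i / sqrt (p i)) {1..n}"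
  unfolding pi_norm_def L2_set_def
  by (intro arg_cong[where f = sqrt] sum.cong) (simp_all add: power_divide p_nonneg)

lemma pi_norm_sq: "(pi_norm n p x)\<^sup>2 = (\<Sum>i\<in>{1..n}. (x i)\<^sup>2 / p i)"
proof -
  have "0 \<le> (\<Sum>i\<in>{1..n}. (x i)\<^sup>2 / p i)"
    by (intro sum_nonneg divide_nonneg_nonneg) (simp_all add: p_nonneg)
  then show ?thesis unfolding pi_norm_def by simp
qed

lemma pi_norm_nonneg: "pi_norm n p x \<ge> 0"
  unfolding pi_norm_eq_L2_set by (rule L2_set_nonneg)

lemma pi_norm_mono:
  assumes "\<And>i. i \<in> {1..n} \<Longrightarrow> 0 \<le> x i \<and> x i \<le> x' i"
  shows "pi_norm n p x \<le> pi_norm n p x'"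
  unfolding pi_norm_eq_L2_set
proof (rule L2_set_mono)
  fix i assume "i \<in> {1..n}"
  with assms p_pos[OF this] show "x i / sqrt (p i) \<le> x' i / sqrt (p i)" and "0 \<le> x i / sqrt (p i)"
    by (auto intro: divide_right_mono)
qed

lemma pi_norm_triangle: "pi_norm n p (\<lambda>i. x i + x' i) \<le> pi_norm n p x + pi_norm n p x'"
  unfolding pi_norm_eq_L2_set by (simp add: add_divide_distrib L2_set_triangle_ineq)

lemma pi_norm_scale: "pi_norm n p (\<lambda>i. c * x i) = \<bar>c\<bar> * pi_norm n p x"
proof -
  have "pi_norm n p (\<lambda>i. c * x i) = pi_norm n p (\<lambda>i. \<bar>c\<bar> * \<bar>x i\<bar>)"
    unfolding pi_norm_def by (simp add: power_mult_distrib)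
  also have "\<dots> = \<bar>c\<bar> * pi_norm n p x"
    unfolding pi_norm_abs[symmetric, of _ _ x] pi_norm_eq_L2_set
    by (simp add: L2_set_right_distrib)
  finally show ?thesis .
qed

lemma sum_abs_le_pi_norm:
  assumes "(\<Sum>i\<in>{1..n}. p i) = 1"
  shows "(\<Sum>i\<in>{1..n}. \<bar>x i\<bar>) \<le> pi_norm n p x"
proof -
  have "(\<Sum>i\<in>{1..n}. \<bar>x i\<bar>) = (\<Sum>i\<in>{1..n}. \<bar>sqrt (p i)\<bar> * \<bar>x i / sqrt (p i)\<bar>)"
  proof (rule sum.cong)
    fix i assume "i \<in> {1..n}"
    from p_pos[OF this] show "\<bar>x i\<bar> = \<bar>sqrt (p i)\<bar> * \<bar>x i / sqrt (p i)\<bar>"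
      by (simp add: abs_div)
  qed simp
  also have "\<dots> \<le> L2_set (\<lambda>i. sqrt (p i)) {1..n} * L2_set (\<lambda>i. x i / sqrt (p i)) {1..n}"
    by (rule L2_set_mult_ineq)
  also have "L2_set (\<lambda>i. sqrt (p i)) {1..n} = 1"
  proof -
    have "(\<Sum>i\<in>{1..n}. (sqrt (p i))\<^sup>2) = (\<Sum>i\<in>{1..n}. p i)"
      by (intro sum.cong) (simp_all add: p_nonneg)
    with assms show ?thesis unfolding L2_set_def by simp
  qed
  finally show ?thesis unfolding pi_norm_eq_L2_set by simp
qed

lemma pi_block_norm_nonneg: "pi_block_norm n p u \<ge> 0"
  unfolding pi_block_norm_eq_pi_norm by (rule pi_norm_nonneg)

lemma pi_block_norm_le_pi_norm:
  "(\<And>i. i \<in> {1..n} \<Longrightarrow> norm (u i) \<le> x i) \<Longrightarrow> pi_block_norm n p u \<le> pi_norm n p x"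
  unfolding pi_block_norm_eq_pi_norm by (intro pi_norm_mono) auto

lemma pi_block_norm_triangle:
  "pi_block_norm n p (\<lambda>i. u i + v i) \<le> pi_block_norm n p u + pi_block_norm n p v"
proof -
  have "pi_block_norm n p (\<lambda>i. u i + v i) \<le> pi_norm n p (\<lambda>i. norm (u i) + norm (v i))"
    by (intro pi_block_norm_le_pi_norm norm_triangle_ineq)
  also have "\<dots> \<le> pi_block_norm n p u + pi_block_norm n p v"
    unfolding pi_block_norm_eq_pi_norm by (rule pi_norm_triangle)
  finally show ?thesis .
qed

lemma pi_block_norm_scaleR: "pi_block_norm n p (\<lambda>i. c *\<^sub>R u i) = \<bar>c\<bar> * pi_block_norm n p u"
  unfolding pi_block_norm_eq_pi_norm by (simp add: pi_norm_scale)

lemma pi_block_norm_const: "pi_block_norm n p (\<lambda>i. v) = norm v * sqrt (\<Sum>i\<in>{1..n}. 1 / p i)"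
proof -
  have "(\<Sum>i\<in>{1..n}. (norm v)\<^sup>2 / p i) = (norm v)\<^sup>2 * (\<Sum>i\<in>{1..n}. 1 / p i)"
    by (simp add: sum_distrib_left)
  then show ?thesis unfolding pi_block_norm_def by (simp add: real_sqrt_mult)
qed

lemma pi_norm_mat_vec_le:
  "pi_norm n p (mat_vec n M x)
    \<le> L2_set (\<lambda>i. L2_set (\<lambda>j. M i j * sqrt (p j)) {1..n} / sqrt (p i)) {1..n} * pi_norm n p x"
proof -
  have row: "\<bar>mat_vec n M x i\<bar> \<le> L2_set (\<lambda>j. M i j * sqrt (p j)) {1..n} * pi_norm n p x" for i
  proof -
    have "mat_vec n M x i = (\<Sum>j\<in>{1..n}. (M i j * sqrt (p j)) * (x j / sqrt (p j)))"
    proof (unfold mat_vec_def, rule sum.cong)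
      fix j assume "j \<in> {1..n}"
      from p_pos[OF this] show "M i j * x j = M i j * sqrt (p j) * (x j / sqrt (p j))"
        by (simp add: less_imp_le)
    qed simp
    also have "\<bar>\<dots>\<bar> \<le> (\<Sum>j\<in>{1..n}. \<bar>M i j * sqrt (p j)\<bar> * \<bar>x j / sqrt (p j)\<bar>)"
      by (rule order_trans[OF sum_abs]) (simp only: abs_mult order_refl)
    also have "\<dots> \<le> L2_set (\<lambda>j. M i j * sqrt (p j)) {1..n} * L2_set (\<lambda>j. x j / sqrt (p j)) {1..n}"
      by (rule L2_set_mult_ineq)
    finally show ?thesis unfolding pi_norm_eq_L2_set .
  qed
  have "pi_norm n p (mat_vec n M x) = L2_set (\<lambda>i. \<bar>mat_vec n M x i\<bar> / sqrt (p i)) {1..n}"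
    unfolding pi_norm_eq_L2_set L2_set_def by (simp add: power_divide)
  also have "\<dots> \<le> L2_set (\<lambda>i. L2_set (\<lambda>j. M i j * sqrt (p j)) {1..n} / sqrt (p i) * pi_norm n p x) {1..n}"
  proof (rule L2_set_mono)
    fix i assume "i \<in> {1..n}"
    from p_pos[OF this] show "\<bar>mat_vec n M x i\<bar> / sqrt (p i)
        \<le> L2_set (\<lambda>j. M i j * sqrt (p j)) {1..n} / sqrt (p i) * pi_norm n p x"
      and "0 \<le> \<bar>mat_vec n M x i\<bar> / sqrt (p i)"
      using row[of i] by (simp_all add: divide_simps)
  qed
  also have "\<dots> = L2_set (\<lambda>i. L2_set (\<lambda>j. M i j * sqrt (p j)) {1..n} / sqrt (p i)) {1..n} * pi_norm n p x"
    by (simp add: L2_set_right_distrib[OF pi_norm_nonneg] mult.commute)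
  finally show ?thesis .
qed

lemma bdd_above_pi_op_norm_quotients:
  "bdd_above ((\<lambda>x. pi_norm n p (mat_vec n M x) / pi_norm n p x) ` {x. pi_norm n p x \<noteq> 0})"
proof (rule bdd_aboveI2)
  fix x assume "x \<in> {x. pi_norm n p x \<noteq> 0}"
  then have "pi_norm n p x > 0"
    using pi_norm_nonneg[of x] by simp
  then show "pi_norm n p (mat_vec n M x) / pi_norm n p x
      \<le> L2_set (\<lambda>i. L2_set (\<lambda>j. M i j * sqrt (p j)) {1..n} / sqrt (p i)) {1..n}"
    using pi_norm_mat_vec_le[of M x] by (simp add: divide_simps)
qed

lemma pi_norm_mat_vec_le_op_norm: "pi_norm n p (mat_vec n M x) \<le> pi_op_norm n p M * pi_norm n p x"
proof (cases "pi_norm n p x = 0")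
  case True
  then show ?thesis
    using pi_norm_mat_vec_le[of M x] pi_norm_nonneg[of "mat_vec n M x"] by simp
next
  case False
  then have "pi_norm n p (mat_vec n M x) / pi_norm n p x \<le> pi_op_norm n p M"
    unfolding pi_op_norm_def by (intro cSUP_upper[OF _ bdd_above_pi_op_norm_quotients]) auto
  with False show ?thesis
    using pi_norm_nonneg[of x] by (simp add: divide_simps)
qed

lemma pi_op_norm_nonneg:
  assumes "n \<ge> 1"
  shows "pi_op_norm n p M \<ge> 0"
proof -
  have "(\<Sum>i\<in>{1..n}. 1 / p i) > 0"
    using assms p_pos by (intro sum_pos) auto
  then have "pi_norm n p (\<lambda>_. 1) \<noteq> 0"
    unfolding pi_norm_def by simp
  then have "pi_norm n p (mat_vec n M (\<lambda>_. 1)) / pi_norm n p (\<lambda>_. 1) \<le> pi_op_norm n p M"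
    unfolding pi_op_norm_def by (intro cSUP_upper[OF _ bdd_above_pi_op_norm_quotients]) auto
  moreover have "0 \<le> pi_norm n p (mat_vec n M (\<lambda>_. 1)) / pi_norm n p (\<lambda>_. 1)"
    by (simp add: pi_norm_nonneg)
  ultimately show ?thesis by linarith
qed

text \<open>Stacked vectors are handled coordinatewise in the basis of \<open>'a\<close>, so the
  operator norm on \<open>\<real>\<^sup>n\<close> also bounds the action of \<open>M \<otimes> I\<^sub>d\<close>.\<close>

lemma pi_block_norm_sq_eq:
  fixes u :: "nat \<Rightarrow> 'a::euclidean_space"
  shows "(pi_block_norm n p u)\<^sup>2 = (\<Sum>b\<in>Basis. (pi_norm n p (\<lambda>i. u i \<bullet> b))\<^sup>2)"
proof -
  have "(norm (u i))\<^sup>2 = (\<Sum>b\<in>Basis. (u i \<bullet> b)\<^sup>2)" for i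
    unfolding power2_norm_eq_inner by (subst euclidean_inner) (simp add: power2_eq_square)
  then have "(pi_block_norm n p u)\<^sup>2 = (\<Sum>i\<in>{1..n}. \<Sum>b\<in>Basis. (u i \<bullet> b)\<^sup>2 / p i)"
    unfolding pi_block_norm_eq_pi_norm pi_norm_sq by (simp add: sum_divide_distrib)
  also have "\<dots> = (\<Sum>b\<in>Basis. (pi_norm n p (\<lambda>i. u i \<bullet> b))\<^sup>2)"
    unfolding pi_norm_sq by (rule sum.swap)
  finally show ?thesis .
qed

lemma pi_block_norm_mat_le_op_norm:
  fixes u :: "nat \<Rightarrow> 'a::euclidean_space"
  assumes "n \<ge> 1"
  shows "pi_block_norm n p (\<lambda>i. \<Sum>j\<in>{1..n}. M i j *\<^sub>R u j) \<le> pi_op_norm n p M * pi_block_norm n p u"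
proof (rule power2_le_imp_le)
  have coord: "(\<lambda>i. (\<Sum>j\<in>{1..n}. M i j *\<^sub>R u j) \<bullet> b) = mat_vec n M (\<lambda>j. u j \<bullet> b)" for b
    unfolding mat_vec_def by (simp add: inner_sum_left)
  have "(pi_block_norm n p (\<lambda>i. \<Sum>j\<in>{1..n}. M i j *\<^sub>R u j))\<^sup>2
      = (\<Sum>b\<in>Basis. (pi_norm n p (mat_vec n M (\<lambda>j. u j \<bullet> b)))\<^sup>2)"
    unfolding pi_block_norm_sq_eq coord ..
  also have "\<dots> \<le> (\<Sum>b\<in>Basis. (pi_op_norm n p M * pi_norm n p (\<lambda>j. u j \<bullet> b))\<^sup>2)"
    by (intro sum_mono power_mono pi_norm_mat_vec_le_op_norm pi_norm_nonneg)
  also have "\<dots> = (pi_op_norm n p M * pi_block_norm n p u)\<^sup>2"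
    unfolding power_mult_distrib pi_block_norm_sq_eq by (simp add: sum_distrib_left)
  finally show "(pi_block_norm n p (\<lambda>i. \<Sum>j\<in>{1..n}. M i j *\<^sub>R u j))\<^sup>2
      \<le> (pi_op_norm n p M * pi_block_norm n p u)\<^sup>2" .
  show "0 \<le> pi_op_norm n p M * pi_block_norm n p u"
    using assms by (simp add: pi_op_norm_nonneg pi_block_norm_nonneg)
qed

end

section \<open>Push-sum weights\<close>

locale push_sum =
  fixes n :: nat and E :: "(nat \<times> nat) set" and y :: "nat \<Rightarrow> nat \<Rightarrow> real"
  assumes n_pos: "n \<ge> 1"
    and E_sub: "E \<subseteq> {1..n} \<times> {1..n}"
    and self_loops: "\<And>i. i \<in> {1..n} \<Longrightarrow> (i, i) \<in> E"
    and y_0: "\<And>i. i \<in> {1..n} \<Longrightarrow> y 0 i = 1"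
    and y_Suc: "\<And>t i. i \<in> {1..n} \<Longrightarrow> y (Suc t) i = (\<Sum>j\<in>{1..n}. Wmat E i j * y t j)"
begin

lemma out_deg_pos: "j \<in> {1..n} \<Longrightarrow> out_deg E j \<ge> 1"
proof -
  assume j: "j \<in> {1..n}"
  have "finite {i. (j, i) \<in> E}"
    by (rule finite_subset[of _ "{1..n}"]) (use E_sub in auto)
  moreover have "j \<in> {i. (j, i) \<in> E}"
    using self_loops[OF j] by simp
  ultimately show ?thesis
    unfolding out_deg_def by (metis One_nat_def Suc_leI card_gt_0_iff empty_iff)
qed

lemma Wmat_nonneg: "Wmat E i j \<ge> 0"
  unfolding Wmat_def by simp

lemma Wmat_ge_edge: "(j, i) \<in> E \<Longrightarrow> Wmat E i j \<ge> 1 / real n"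
proof -
  assume e: "(j, i) \<in> E"
  then have j: "j \<in> {1..n}" using E_sub by auto
  have "out_deg E j \<le> n"
    unfolding out_deg_def using E_sub by (intro card_mono[of "{1..n}", simplified]) auto
  with out_deg_pos[OF j] e show ?thesis
    unfolding Wmat_def by (simp add: frac_le)
qed

lemma Wmat_column_sum: "j \<in> {1..n} \<Longrightarrow> (\<Sum>i\<in>{1..n}. Wmat E i j) = 1"
proof -
  assume j: "j \<in> {1..n}"
  have out: "{i \<in> {1..n}. (j, i) \<in> E} = {i. (j, i) \<in> E}"
    using E_sub by auto
  have "(\<Sum>i\<in>{1..n}. Wmat E i j) = (\<Sum>i\<in>{i \<in> {1..n}. (j, i) \<in> E}. 1 / real (out_deg E j))"
    unfolding Wmat_def by (simp add: sum.inter_filter[symmetric])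
  also have "\<dots> = 1"
    unfolding out using out_deg_pos[OF j] unfolding out_deg_def by simp
  finally show ?thesis .
qed

lemma Wmat_term_le_sum:
  assumes "\<And>j. j \<in> {1..n} \<Longrightarrow> x j \<ge> 0" and "l \<in> {1..n}"
  shows "Wmat E i l * x l \<le> (\<Sum>j\<in>{1..n}. Wmat E i j * x j)"
proof (rule member_le_sum)
  fix j assume "j \<in> {1..n} - {l}"
  then show "0 \<le> Wmat E i j * x j"
    using assms(1) Wmat_nonneg by simp
qed (use assms(2) in simp_all)

lemma y_pos: "i \<in> {1..n} \<Longrightarrow> y t i > 0"
proof (induction t arbitrary: i)
  case 0
  then show ?case by (simp add: y_0)
next
  case (Suc t)
  have "0 < Wmat E i i * y t i"
    using Wmat_ge_edge[OF self_loops[OF Suc.prems]] n_pos Suc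
    by (intro mult_pos_pos) (auto intro: less_le_trans[of 0 "1 / real n"])
  also have "\<dots> \<le> (\<Sum>j\<in>{1..n}. Wmat E i j * y t j)"
    using Suc.IH Suc.prems by (intro Wmat_term_le_sum less_imp_le)
  finally show ?case
    using y_Suc[OF Suc.prems] by simp
qed

lemma y_Suc_ge_edge: "(j, i) \<in> E \<Longrightarrow> y t j / real n \<le> y (Suc t) i"
proof -
  assume e: "(j, i) \<in> E"
  then have i: "i \<in> {1..n}" and j: "j \<in> {1..n}" using E_sub by auto
  have "y t j / real n = 1 / real n * y t j"
    by simp
  also have "\<dots> \<le> Wmat E i j * y t j"
    using Wmat_ge_edge[OF e] less_imp_le[OF y_pos[OF j]] by (rule mult_right_mono)
  also have "\<dots> \<le> (\<Sum>l\<in>{1..n}. Wmat E i l * y t l)"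
    using j y_pos by (intro Wmat_term_le_sum less_imp_le)
  finally show ?thesis
    using y_Suc[OF i] by simp
qed

lemma y_sum: "(\<Sum>i\<in>{1..n}. y t i) = real n"
proof (induction t)
  case 0
  then show ?case by (simp add: y_0)
next
  case (Suc t)
  have "(\<Sum>i\<in>{1..n}. y (Suc t) i) = (\<Sum>i\<in>{1..n}. \<Sum>j\<in>{1..n}. Wmat E i j * y t j)"
    by (simp add: y_Suc)
  also have "\<dots> = (\<Sum>j\<in>{1..n}. (\<Sum>i\<in>{1..n}. Wmat E i j) * y t j)"
    by (subst sum.swap) (simp add: sum_distrib_right)
  also have "\<dots> = (\<Sum>j\<in>{1..n}. y t j)"
  proof (rule sum.cong)
    fix j assume "j \<in> {1..n}"
    from Wmat_column_sum[OF this] show "(\<Sum>i\<in>{1..n}. Wmat E i j) * y t j = y t j"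
      by simp
  qed simp
  finally show ?case
    using Suc.IH by simp
qed

lemma y_ge_reachable: "(j, i) \<in> E\<^sup>* \<Longrightarrow> \<exists>k. \<forall>s. y s j / real n ^ k \<le> y (s + k) i"
proof (induction rule: rtrancl_induct)
  case base
  show ?case by (intro exI[of _ 0]) simp
next
  case (step m i)
  then obtain k where k: "\<forall>s. y s j / real n ^ k \<le> y (s + k) m"
    by blast
  have "y s j / real n ^ Suc k \<le> y (s + Suc k) i" for s
  proof -
    have "y s j / real n ^ Suc k = (y s j / real n ^ k) / real n"
      by (simp add: field_simps)
    also have "\<dots> \<le> y (s + k) m / real n"
      using k by (intro divide_right_mono) simp_all
    also have "\<dots> \<le> y (s + Suc k) i"
      using y_Suc_ge_edge[OF step.hyps(2)] by simp
    finally show ?thesis .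
  qed
  then show ?case by blast
qed

lemma y_ge_self: "i \<in> {1..n} \<Longrightarrow> y t i / real n ^ r \<le> y (t + r) i"
proof (induction r)
  case 0
  then show ?case by simp
next
  case (Suc r)
  have "y t i / real n ^ Suc r = (y t i / real n ^ r) / real n"
    by (simp add: field_simps)
  also have "\<dots> \<le> y (t + r) i / real n"
    using Suc by (intro divide_right_mono) simp_all
  also have "\<dots> \<le> y (t + Suc r) i"
    using y_Suc_ge_edge[OF self_loops[OF Suc.prems]] by simp
  finally show ?case .
qed

lemma y_ge_uniform:
  assumes "strongly_connected_on n E"
  obtains K where "\<And>i j s. i \<in> {1..n} \<Longrightarrow> j \<in> {1..n} \<Longrightarrow> y s j / real n ^ K \<le> y (s + K) i"
proof -
  have "\<forall>ij\<in>{1..n} \<times> {1..n}. \<exists>k. \<forall>s. y s (snd ij) / real n ^ k \<le> y (s + k) (fst ij)"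
    using assms y_ge_reachable unfolding strongly_connected_on_def by auto
  then obtain k where k: "\<And>i j s. (i, j) \<in> {1..n} \<times> {1..n} \<Longrightarrow> y s j / real n ^ k (i, j) \<le> y (s + k (i, j)) i"
    by (metis fst_conv snd_conv)
  define K where "K = Max (k ` ({1..n} \<times> {1..n}))"
  have "y s j / real n ^ K \<le> y (s + K) i" if i: "i \<in> {1..n}" and j: "j \<in> {1..n}" for i j s
  proof -
    have kK: "k (i, j) \<le> K"
      unfolding K_def using i j by (intro Max_ge) auto
    have "y s j / real n ^ K = (y s j / real n ^ k (i, j)) / real n ^ (K - k (i, j))"
      using kK n_pos by (simp add: power_add[symmetric])
    also have "\<dots> \<le> y (s + k (i, j)) i / real n ^ (K - k (i, j))"
      using k[of i j s] i j by (intro divide_right_mono) simp_all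
    also have "\<dots> \<le> y (s + K) i"
      using y_ge_self[OF i, of "s + k (i, j)" "K - k (i, j)"] kK by simp
    finally show ?thesis .
  qed
  then show ?thesis using that by blast
qed

lemma y_lower_bound:
  assumes "strongly_connected_on n E"
  obtains c where "c > 0" and "\<And>t i. i \<in> {1..n} \<Longrightarrow> c \<le> y t i"
proof -
  obtain K where K: "\<And>i j s. i \<in> {1..n} \<Longrightarrow> j \<in> {1..n} \<Longrightarrow> y s j / real n ^ K \<le> y (s + K) i"
    using y_ge_uniform[OF assms] by blast
  have "1 / real n ^ K \<le> y t i" if i: "i \<in> {1..n}" for t i
  proof (cases "t < K")
    case True
    have "1 / real n ^ K \<le> 1 / real n ^ t"
      using True n_pos by (intro divide_left_mono power_increasing) auto
    also have "\<dots> \<le> y t i"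
      using y_ge_self[OF i, of 0 t] by (simp add: y_0[OF i])
    finally show ?thesis .
  next
    case False
    then obtain s where t: "t = s + K"
      by (metis add.commute le_add_diff_inverse not_less)
    have "real n * (1 / real n ^ K) = (\<Sum>j\<in>{1..n}. y s j / real n ^ K)"
      by (simp only: sum_divide_distrib[symmetric] y_sum) simp
    also have "\<dots> \<le> (\<Sum>j\<in>{1..n}. y t i)"
      using K i unfolding t by (intro sum_mono) auto
    also have "\<dots> = real n * y t i"
      by simp
    finally show ?thesis
      by (rule mult_left_le_imp_le) (use n_pos in simp)
  qed
  moreover have "1 / real n ^ K > 0"
    using n_pos by simp
  ultimately show ?thesis using that by blast
qed

lemma inverse_y_le_Sup:
  assumes "strongly_connected_on n E" and "i \<in> {1..n}"
  shows "1 / y t i \<le> (SUP t. Max ((\<lambda>i. 1 / y t i) ` {1..n}))"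
proof -
  obtain c where "c > 0" and c: "\<And>t i. i \<in> {1..n} \<Longrightarrow> c \<le> y t i"
    using y_lower_bound[OF assms(1)] by blast
  have "Max ((\<lambda>i. 1 / y t i) ` {1..n}) \<le> 1 / c" for t
    using n_pos \<open>c > 0\<close> c by (subst Max_le_iff) (auto intro!: frac_le)
  then have "bdd_above (range (\<lambda>t. Max ((\<lambda>i. 1 / y t i) ` {1..n})))"
    by (intro bdd_aboveI) auto
  moreover have "1 / y t i \<le> Max ((\<lambda>i. 1 / y t i) ` {1..n})"
    using assms(2) by (intro Max_ge) auto
  ultimately show ?thesis
    by (meson UNIV_I cSUP_upper order_trans)
qed

end

section \<open>Gradient-push iterates\<close>

lemma affine_recursion_invariant:
  fixes A B :: "nat \<Rightarrow> real"
  assumes A_Suc: "\<And>t. t0 \<le> t \<Longrightarrow> A (Suc t) \<le> a1 * A t + a2 * B t + a3"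
    and B_Suc: "\<And>t. t0 \<le> t \<Longrightarrow> B (Suc t) \<le> b1 * A t + b2 * B t + b3"
    and "0 \<le> a1" "0 \<le> a2" "0 \<le> b1" "0 \<le> b2"
    and "A t0 \<le> RA" "B t0 \<le> RB"
    and RA: "a1 * RA + a2 * RB + a3 \<le> RA" and RB: "b1 * RA + b2 * RB + b3 \<le> RB"
    and "t0 \<le> t"
  shows "A t \<le> RA \<and> B t \<le> RB"
  using \<open>t0 \<le> t\<close>
proof (induction rule: dec_induct)
  case base
  with assms show ?case by simp
next
  case (step t)
  have "a1 * A t + a2 * B t \<le> a1 * RA + a2 * RB" and "b1 * A t + b2 * B t \<le> b1 * RA + b2 * RB"
    using step.IH assms(3-6) by (intro add_mono mult_left_mono; simp)+
  then show ?case
    using A_Suc[OF step.hyps(1)] B_Suc[OF step.hyps(1)] RA RB by linarith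
qed

lemma bdd_above_range_if_eventually_le:
  fixes X :: "nat \<Rightarrow> real"
  assumes "\<And>t. t0 \<le> t \<Longrightarrow> X t \<le> M"
  shows "bdd_above (range X)"
proof (rule bdd_aboveI)
  fix x assume "x \<in> range X"
  then obtain t where "x = X t" by blast
  moreover have "X t \<le> max M (Max (X ` {..t0}))"
  proof (cases "t0 \<le> t")
    case True
    then show ?thesis using assms[of t] by simp
  next
    case False
    then have "X t \<le> Max (X ` {..t0})"
      by (intro Max_ge) auto
    then show ?thesis by simp
  qed
  ultimately show "x \<le> max M (Max (X ` {..t0}))" by simp
qed

locale gradient_push = push_sum n E y + pi_weights n p
  for n :: nat and E :: "(nat \<times> nat) set" and y :: "nat \<Rightarrow> nat \<Rightarrow> real" and p :: "nat \<Rightarrow> real" +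
  fixes g :: "nat \<Rightarrow> 'a::euclidean_space \<Rightarrow> 'a" and L \<alpha> \<delta> :: real and w :: "nat \<Rightarrow> nat \<Rightarrow> 'a"
  assumes p_stationary: "\<And>i. i \<in> {1..n} \<Longrightarrow> (\<Sum>j\<in>{1..n}. Wmat E i j * p j) = p i"
    and p_sum: "(\<Sum>i\<in>{1..n}. p i) = 1"
    and g_lipschitz: "\<And>i x x'. i \<in> {1..n} \<Longrightarrow> norm (g i x - g i x') \<le> L * norm (x - x')"
    and L_pos: "L > 0"
    and \<alpha>_pos: "\<alpha> > 0"
    and inverse_y_le: "\<And>t i. i \<in> {1..n} \<Longrightarrow> 1 / y t i \<le> \<delta>"
    and w_Suc: "\<And>t i. i \<in> {1..n} \<Longrightarrow>
      w (Suc t) i = (\<Sum>j\<in>{1..n}. Wmat E i j *\<^sub>R (w t j - \<alpha> *\<^sub>R g j ((1 / y t j) *\<^sub>R w t j)))"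
begin

definition z :: "nat \<Rightarrow> nat \<Rightarrow> 'a" where
  "z t j = (1 / y t j) *\<^sub>R w t j"

definition wbar :: "nat \<Rightarrow> 'a" where
  "wbar t = (1 / real n) *\<^sub>R (\<Sum>i\<in>{1..n}. w t i)"

definition deviation :: "nat \<Rightarrow> nat \<Rightarrow> 'a" where
  "deviation t i = w t i - (real n * p i) *\<^sub>R wbar t"

lemma delta_pos: "\<delta> > 0"
proof -
  have "1 \<in> {1..n}"
    using n_pos by simp
  from y_pos[OF this] have "0 < 1 / y 0 1"
    by simp
  with inverse_y_le[where t = 0, OF \<open>1 \<in> {1..n}\<close>] show ?thesis
    by linarith
qed

lemma sigmaW_nonneg: "sigmaW n E p \<ge> 0"
  unfolding sigmaW_def by (rule pi_op_norm_nonneg[OF n_pos])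

text \<open>Mixing with \<open>W\<close> and subtracting the \<open>p\<close>-weighted total is the action of
  \<open>W - W\<^sup>\<infinity>\<close>; since \<open>W p = p\<close> and \<open>\<Sum>p = 1\<close>, this is unchanged by any shift of the
  input along \<open>p\<close>.\<close>

lemma mixing_deviation:
  fixes x :: "nat \<Rightarrow> 'b::real_vector"
  assumes "i \<in> {1..n}"
  shows "(\<Sum>j\<in>{1..n}. Wmat E i j *\<^sub>R x j) - p i *\<^sub>R (\<Sum>j\<in>{1..n}. x j)
    = (\<Sum>j\<in>{1..n}. (Wmat E i j - p i) *\<^sub>R (x j - p j *\<^sub>R c))"
proof -
  have "(\<Sum>j\<in>{1..n}. (Wmat E i j - p i) *\<^sub>R (p j *\<^sub>R c))
      = ((\<Sum>j\<in>{1..n}. Wmat E i j * p j) - p i * (\<Sum>j\<in>{1..n}. p j)) *\<^sub>R c"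
    by (simp add: algebra_simps scaleR_sum_left sum_distrib_left sum_subtractf)
  also have "\<dots> = 0"
    using p_stationary[OF assms] p_sum by simp
  finally have shift: "(\<Sum>j\<in>{1..n}. (Wmat E i j - p i) *\<^sub>R (p j *\<^sub>R c)) = 0" .
  have "(\<Sum>j\<in>{1..n}. (Wmat E i j - p i) *\<^sub>R (x j - p j *\<^sub>R c))
      = (\<Sum>j\<in>{1..n}. (Wmat E i j - p i) *\<^sub>R x j) - (\<Sum>j\<in>{1..n}. (Wmat E i j - p i) *\<^sub>R (p j *\<^sub>R c))"
    by (simp add: scaleR_diff_right sum_subtractf)
  also have "\<dots> = (\<Sum>j\<in>{1..n}. Wmat E i j *\<^sub>R x j) - p i *\<^sub>R (\<Sum>j\<in>{1..n}. x j)"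
    unfolding shift by (simp add: scaleR_diff_left sum_subtractf scaleR_sum_right)
  finally show ?thesis ..
qed

lemma weight_deviation_le:
  "pi_norm n p (\<lambda>i. y t i - real n * p i) \<le> sigmaW n E p ^ t * pi_norm n p (\<lambda>i. 1 - real n * p i)"
proof (induction t)
  case 0
  have "pi_norm n p (\<lambda>i. y 0 i - real n * p i) = pi_norm n p (\<lambda>i. 1 - real n * p i)"
    by (rule pi_norm_cong) (simp add: y_0)
  then show ?case by simp
next
  case (Suc t)
  have "y (Suc t) i - real n * p i = mat_vec n (\<lambda>i j. Wmat E i j - p i) (\<lambda>j. y t j - real n * p j) i"
    if "i \<in> {1..n}" for i
    using mixing_deviation[OF that, of "y t" "real n"] y_sum[of t]
    by (simp add: y_Suc[OF that] mat_vec_def mult.commute)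
  then have "pi_norm n p (\<lambda>i. y (Suc t) i - real n * p i)
      = pi_norm n p (mat_vec n (\<lambda>i j. Wmat E i j - p i) (\<lambda>j. y t j - real n * p j))"
    by (rule pi_norm_cong)
  also have "\<dots> \<le> sigmaW n E p * pi_norm n p (\<lambda>j. y t j - real n * p j)"
    unfolding sigmaW_def by (rule pi_norm_mat_vec_le_op_norm)
  also have "\<dots> \<le> sigmaW n E p * (sigmaW n E p ^ t * pi_norm n p (\<lambda>i. 1 - real n * p i))"
    by (rule mult_left_mono[OF Suc sigmaW_nonneg])
  finally show ?case by simp
qed

lemma sum_w_Suc: "(\<Sum>i\<in>{1..n}. w (Suc t) i) = (\<Sum>j\<in>{1..n}. w t j - \<alpha> *\<^sub>R g j (z t j))"
proof -
  have "(\<Sum>i\<in>{1..n}. w (Suc t) i)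
      = (\<Sum>i\<in>{1..n}. \<Sum>j\<in>{1..n}. Wmat E i j *\<^sub>R (w t j - \<alpha> *\<^sub>R g j (z t j)))"
    unfolding z_def by (rule sum.cong) (simp_all add: w_Suc)
  also have "\<dots> = (\<Sum>j\<in>{1..n}. (\<Sum>i\<in>{1..n}. Wmat E i j) *\<^sub>R (w t j - \<alpha> *\<^sub>R g j (z t j)))"
    by (subst sum.swap) (simp add: scaleR_sum_left)
  also have "\<dots> = (\<Sum>j\<in>{1..n}. w t j - \<alpha> *\<^sub>R g j (z t j))"
  proof (rule sum.cong)
    fix j assume "j \<in> {1..n}"
    from Wmat_column_sum[OF this]
    show "(\<Sum>i\<in>{1..n}. Wmat E i j) *\<^sub>R (w t j - \<alpha> *\<^sub>R g j (z t j)) = w t j - \<alpha> *\<^sub>R g j (z t j)"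
      by simp
  qed simp
  finally show ?thesis .
qed

lemma wbar_Suc: "wbar (Suc t) = wbar t - (\<alpha> / real n) *\<^sub>R (\<Sum>j\<in>{1..n}. g j (z t j))"
  unfolding wbar_def sum_w_Suc
  by (simp add: sum_subtractf scaleR_diff_right flip: scaleR_sum_right)

lemma deviation_Suc:
  assumes "i \<in> {1..n}"
  shows "deviation (Suc t) i = (\<Sum>j\<in>{1..n}. (Wmat E i j - p i) *\<^sub>R (deviation t j - \<alpha> *\<^sub>R g j (z t j)))"
proof -
  define x where "x j = w t j - \<alpha> *\<^sub>R g j (z t j)" for j
  have "(real n * p i) *\<^sub>R wbar (Suc t) = p i *\<^sub>R (\<Sum>j\<in>{1..n}. x j)"
    using n_pos unfolding wbar_def sum_w_Suc x_def by simp
  then have "deviation (Suc t) i = (\<Sum>j\<in>{1..n}. Wmat E i j *\<^sub>R x j) - p i *\<^sub>R (\<Sum>j\<in>{1..n}. x j)"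
    unfolding deviation_def w_Suc[OF assms] x_def z_def by simp
  also have "\<dots> = (\<Sum>j\<in>{1..n}. (Wmat E i j - p i) *\<^sub>R (x j - p j *\<^sub>R (real n *\<^sub>R wbar t)))"
    by (rule mixing_deviation[OF assms])
  also have "\<dots> = (\<Sum>j\<in>{1..n}. (Wmat E i j - p i) *\<^sub>R (deviation t j - \<alpha> *\<^sub>R g j (z t j)))"
    unfolding x_def deviation_def by (simp add: algebra_simps)
  finally show ?thesis .
qed

lemma consensus_error_Suc_le:
  "pi_block_norm n p (deviation (Suc t))
    \<le> sigmaW n E p * (pi_block_norm n p (deviation t) + \<alpha> * pi_block_norm n p (\<lambda>j. g j (z t j)))"
proof -
  have "pi_block_norm n p (deviation (Suc t))
      = pi_block_norm n p (\<lambda>i. \<Sum>j\<in>{1..n}. (Wmat E i j - p i) *\<^sub>R (deviation t j - \<alpha> *\<^sub>R g j (z t j)))"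
    by (rule pi_block_norm_cong) (rule deviation_Suc)
  also have "\<dots> \<le> sigmaW n E p * pi_block_norm n p (\<lambda>j. deviation t j - \<alpha> *\<^sub>R g j (z t j))"
    unfolding sigmaW_def by (rule pi_block_norm_mat_le_op_norm[OF n_pos])
  also have "\<dots> \<le> sigmaW n E p * (pi_block_norm n p (deviation t) + \<alpha> * pi_block_norm n p (\<lambda>j. g j (z t j)))"
  proof (rule mult_left_mono[OF _ sigmaW_nonneg])
    have "pi_block_norm n p (\<lambda>j. deviation t j + (- \<alpha>) *\<^sub>R g j (z t j))
        \<le> pi_block_norm n p (deviation t) + pi_block_norm n p (\<lambda>j. (- \<alpha>) *\<^sub>R g j (z t j))"
      by (rule pi_block_norm_triangle)
    then show "pi_block_norm n p (\<lambda>j. deviation t j - \<alpha> *\<^sub>R g j (z t j))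
        \<le> pi_block_norm n p (deviation t) + \<alpha> * pi_block_norm n p (\<lambda>j. g j (z t j))"
      using pi_block_norm_scaleR[of "- \<alpha>" "\<lambda>j. g j (z t j)"] \<alpha>_pos by simp
  qed
  finally show ?thesis .
qed

lemma norm_z_sub_wbar_le:
  assumes "j \<in> {1..n}"
  shows "norm (z t j - wbar t) \<le> \<delta> * (norm (deviation t j) + \<bar>real n * p j - y t j\<bar> * norm (wbar t))"
proof -
  have y: "y t j > 0" by (rule y_pos[OF assms])
  then have "z t j - wbar t = (1 / y t j) *\<^sub>R (deviation t j + (real n * p j - y t j) *\<^sub>R wbar t)"
    unfolding z_def deviation_def by (simp add: algebra_simps)
  then have "norm (z t j - wbar t) = 1 / y t j * norm (deviation t j + (real n * p j - y t j) *\<^sub>R wbar t)"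
    using y by simp
  also have "\<dots> \<le> 1 / y t j * (norm (deviation t j) + \<bar>real n * p j - y t j\<bar> * norm (wbar t))"
    using y norm_triangle_ineq[of "deviation t j" "(real n * p j - y t j) *\<^sub>R wbar t"]
    by (intro mult_left_mono) simp_all
  also have "\<dots> \<le> \<delta> * (norm (deviation t j) + \<bar>real n * p j - y t j\<bar> * norm (wbar t))"
    by (intro mult_right_mono inverse_y_le[OF assms]) simp
  finally show ?thesis .
qed

lemma sum_norm_z_sub_wbar_le:
  "(\<Sum>j\<in>{1..n}. norm (z t j - wbar t))
    \<le> \<delta> * (pi_block_norm n p (deviation t)
      + sigmaW n E p ^ t * pi_norm n p (\<lambda>i. 1 - real n * p i) * norm (wbar t))"
proof -
  have "(\<Sum>j\<in>{1..n}. norm (z t j - wbar t))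
      \<le> (\<Sum>j\<in>{1..n}. \<delta> * (norm (deviation t j) + \<bar>real n * p j - y t j\<bar> * norm (wbar t)))"
    by (intro sum_mono norm_z_sub_wbar_le)
  also have "\<dots> = \<delta> * ((\<Sum>j\<in>{1..n}. \<bar>norm (deviation t j)\<bar>) + (\<Sum>j\<in>{1..n}. \<bar>y t j - real n * p j\<bar>) * norm (wbar t))"
    by (simp add: sum_distrib_left sum_distrib_right sum.distrib distrib_left abs_minus_commute)
  also have "\<dots> \<le> \<delta> * (pi_block_norm n p (deviation t)
      + sigmaW n E p ^ t * pi_norm n p (\<lambda>i. 1 - real n * p i) * norm (wbar t))"
  proof (intro mult_left_mono add_mono mult_right_mono)
    show "(\<Sum>j\<in>{1..n}. \<bar>norm (deviation t j)\<bar>) \<le> pi_block_norm n p (deviation t)"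
      unfolding pi_block_norm_eq_pi_norm by (rule sum_abs_le_pi_norm[OF p_sum])
    show "(\<Sum>j\<in>{1..n}. \<bar>y t j - real n * p j\<bar>)
        \<le> sigmaW n E p ^ t * pi_norm n p (\<lambda>i. 1 - real n * p i)"
      using sum_abs_le_pi_norm[OF p_sum] weight_deviation_le by (rule order_trans)
  qed (use delta_pos in simp_all)
  finally show ?thesis .
qed

lemma pi_block_norm_z_sub_wbar_le:
  assumes "sigmaW n E p \<le> 1"
  shows "pi_block_norm n p (\<lambda>j. z t j - wbar t)
    \<le> \<delta> * (pi_block_norm n p (deviation t) + pi_norm n p (\<lambda>i. 1 - real n * p i) * norm (wbar t))"
proof -
  have "pi_block_norm n p (\<lambda>j. z t j - wbar t)
      \<le> pi_norm n p (\<lambda>j. \<delta> * (norm (deviation t j) + norm (wbar t) * \<bar>y t j - real n * p j\<bar>))"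
    using norm_z_sub_wbar_le
    by (intro pi_block_norm_le_pi_norm) (simp add: abs_minus_commute mult.commute)
  also have "\<dots> = \<delta> * pi_norm n p (\<lambda>j. norm (deviation t j) + norm (wbar t) * \<bar>y t j - real n * p j\<bar>)"
    using pi_norm_scale[of \<delta>] delta_pos by simp
  also have "\<dots> \<le> \<delta> * (pi_block_norm n p (deviation t) + norm (wbar t) * pi_norm n p (\<lambda>j. y t j - real n * p j))"
  proof (rule mult_left_mono)
    have "pi_norm n p (\<lambda>j. norm (wbar t) * \<bar>y t j - real n * p j\<bar>)
        = norm (wbar t) * pi_norm n p (\<lambda>j. y t j - real n * p j)"
      by (simp add: pi_norm_scale pi_norm_abs)
    then show "pi_norm n p (\<lambda>j. norm (deviation t j) + norm (wbar t) * \<bar>y t j - real n * p j\<bar>)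
        \<le> pi_block_norm n p (deviation t) + norm (wbar t) * pi_norm n p (\<lambda>j. y t j - real n * p j)"
      unfolding pi_block_norm_eq_pi_norm
      using pi_norm_triangle[of "\<lambda>j. norm (deviation t j)" "\<lambda>j. norm (wbar t) * \<bar>y t j - real n * p j\<bar>"]
      by linarith
  qed (use delta_pos in simp)
  also have "\<dots> \<le> \<delta> * (pi_block_norm n p (deviation t) + norm (wbar t) * pi_norm n p (\<lambda>i. 1 - real n * p i))"
  proof -
    have "sigmaW n E p ^ t * pi_norm n p (\<lambda>i. 1 - real n * p i) \<le> 1 * pi_norm n p (\<lambda>i. 1 - real n * p i)"
      using assms sigmaW_nonneg by (intro mult_right_mono power_le_one pi_norm_nonneg)
    then have "pi_norm n p (\<lambda>j. y t j - real n * p j) \<le> pi_norm n p (\<lambda>i. 1 - real n * p i)"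
      using weight_deviation_le[of t] by simp
    then show ?thesis
      using delta_pos by (intro mult_left_mono add_left_mono mult_left_mono) simp_all
  qed
  finally show ?thesis by (simp add: mult.commute)
qed

lemma average_error_Suc_le:
  assumes contraction: "\<And>x. norm (x - \<alpha> *\<^sub>R ((1 / real n) *\<^sub>R (\<Sum>i\<in>{1..n}. g i x)) - wstar)
    \<le> \<kappa> * norm (x - wstar)"
  shows "norm (wbar (Suc t) - wstar)
    \<le> \<kappa> * norm (wbar t - wstar) + \<alpha> * L * \<delta> / real n * (pi_block_norm n p (deviation t)
      + sigmaW n E p ^ t * pi_norm n p (\<lambda>i. 1 - real n * p i) * norm (wbar t))"
proof -
  define D where "D = (\<Sum>j\<in>{1..n}. g j (z t j) - g j (wbar t))"
  have "wbar (Suc t) - wstar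
      = (wbar t - \<alpha> *\<^sub>R ((1 / real n) *\<^sub>R (\<Sum>i\<in>{1..n}. g i (wbar t))) - wstar) - (\<alpha> / real n) *\<^sub>R D"
    unfolding wbar_Suc D_def by (simp add: sum_subtractf algebra_simps)
  then have "norm (wbar (Suc t) - wstar)
      \<le> norm (wbar t - \<alpha> *\<^sub>R ((1 / real n) *\<^sub>R (\<Sum>i\<in>{1..n}. g i (wbar t))) - wstar)
        + norm ((\<alpha> / real n) *\<^sub>R D)"
    by (metis norm_triangle_ineq4)
  also have "\<dots> \<le> \<kappa> * norm (wbar t - wstar) + \<alpha> / real n * norm D"
    using contraction \<alpha>_pos by (intro add_mono) simp_all
  also have "\<alpha> / real n * norm D
      \<le> \<alpha> / real n * (L * (\<delta> * (pi_block_norm n p (deviation t)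
        + sigmaW n E p ^ t * pi_norm n p (\<lambda>i. 1 - real n * p i) * norm (wbar t))))"
  proof (rule mult_left_mono)
    have "norm D \<le> (\<Sum>j\<in>{1..n}. L * norm (z t j - wbar t))"
      unfolding D_def by (intro order_trans[OF norm_sum] sum_mono g_lipschitz)
    also have "\<dots> \<le> L * (\<delta> * (pi_block_norm n p (deviation t)
        + sigmaW n E p ^ t * pi_norm n p (\<lambda>i. 1 - real n * p i) * norm (wbar t)))"
      unfolding sum_distrib_left[symmetric]
      using L_pos by (intro mult_left_mono sum_norm_z_sub_wbar_le) simp
    finally show "norm D \<le> \<dots>" .
  qed (use \<alpha>_pos in simp)
  finally show ?thesis by simp
qed

lemma gradient_pi_block_norm_le:
  assumes "sigmaW n E p \<le> 1"
  shows "pi_block_norm n p (\<lambda>j. g j (z t j))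
    \<le> L * (\<delta> * (pi_block_norm n p (deviation t) + pi_norm n p (\<lambda>i. 1 - real n * p i) * norm (wbar t))
      + norm (wbar t - wstar) * sqrt (\<Sum>j\<in>{1..n}. 1 / p j)) + pi_block_norm n p (\<lambda>j. g j wstar)"
proof -
  have "pi_block_norm n p (\<lambda>j. g j (z t j))
      \<le> pi_block_norm n p (\<lambda>j. g j (z t j) - g j wstar) + pi_block_norm n p (\<lambda>j. g j wstar)"
    using pi_block_norm_triangle[of "\<lambda>j. g j (z t j) - g j wstar" "\<lambda>j. g j wstar"] by simp
  also have "pi_block_norm n p (\<lambda>j. g j (z t j) - g j wstar) \<le> L * pi_block_norm n p (\<lambda>j. z t j - wstar)"
  proof -
    have "pi_block_norm n p (\<lambda>j. g j (z t j) - g j wstar) \<le> pi_norm n p (\<lambda>j. L * norm (z t j - wstar))"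
      by (intro pi_block_norm_le_pi_norm g_lipschitz)
    then show ?thesis
      using L_pos by (simp add: pi_norm_scale pi_block_norm_eq_pi_norm)
  qed
  also have "pi_block_norm n p (\<lambda>j. z t j - wstar)
      \<le> \<delta> * (pi_block_norm n p (deviation t) + pi_norm n p (\<lambda>i. 1 - real n * p i) * norm (wbar t))
        + norm (wbar t - wstar) * sqrt (\<Sum>j\<in>{1..n}. 1 / p j)"
    using pi_block_norm_triangle[of "\<lambda>j. z t j - wbar t" "\<lambda>j. wbar t - wstar"]
      pi_block_norm_z_sub_wbar_le[OF assms, of t]
    by (simp add: pi_block_norm_const)
  finally show ?thesis
    using L_pos by (simp add: mult_left_mono)
qed

lemma average_error_recursion:
  assumes contraction: "\<And>x. norm (x - \<alpha> *\<^sub>R ((1 / real n) *\<^sub>R (\<Sum>i\<in>{1..n}. g i x)) - wstar)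
      \<le> (1 - \<alpha> * \<gamma>) * norm (x - wstar)"
    and "\<gamma> \<ge> 0" and "sigmaW n E p \<le> 1" and "t0 \<le> t"
    and t0: "L * \<delta> / real n * pi_norm n p (\<lambda>i. 1 - real n * p i) * sigmaW n E p ^ t0 \<le> \<gamma> / 2"
  shows "norm (wbar (Suc t) - wstar)
    \<le> (1 - \<alpha> * \<gamma> / 2) * norm (wbar t - wstar) + \<alpha> * L * \<delta> / real n * pi_block_norm n p (deviation t)
      + \<alpha> * \<gamma> / 2 * norm wstar"
proof -
  define c1 where "c1 = pi_norm n p (\<lambda>i. 1 - real n * p i)"
  define A where "A = norm (wbar t - wstar)"
  define B where "B = pi_block_norm n p (deviation t)"
  have "L * \<delta> / real n * c1 * sigmaW n E p ^ t \<le> L * \<delta> / real n * c1 * sigmaW n E p ^ t0"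
    using assms(3,4) sigmaW_nonneg L_pos delta_pos unfolding c1_def
    by (intro mult_left_mono power_decreasing) (simp_all add: pi_norm_nonneg)
  also have "\<dots> \<le> \<gamma> / 2"
    using t0 unfolding c1_def .
  finally have "\<alpha> * (L * \<delta> / real n * c1 * sigmaW n E p ^ t) * norm (wbar t) \<le> \<alpha> * (\<gamma> / 2) * norm (wbar t)"
    using \<alpha>_pos by (intro mult_right_mono mult_left_mono) simp_all
  also have "\<dots> \<le> \<alpha> * (\<gamma> / 2) * (A + norm wstar)"
    using \<alpha>_pos \<open>\<gamma> \<ge> 0\<close> norm_triangle_sub[of "wbar t" wstar] unfolding A_def
    by (intro mult_left_mono) (simp_all add: norm_minus_commute)
  finally have "\<alpha> * L * \<delta> / real n * (sigmaW n E p ^ t * c1 * norm (wbar t)) \<le> \<alpha> * (\<gamma> / 2) * (A + norm wstar)"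
    by (simp add: algebra_simps)
  moreover have "norm (wbar (Suc t) - wstar)
      \<le> (1 - \<alpha> * \<gamma>) * A + \<alpha> * L * \<delta> / real n * B + \<alpha> * L * \<delta> / real n * (sigmaW n E p ^ t * c1 * norm (wbar t))"
    using average_error_Suc_le[OF contraction, of t] unfolding A_def B_def c1_def
    by (simp add: distrib_left)
  moreover have "(1 - \<alpha> * \<gamma>) * A + \<alpha> * L * \<delta> / real n * B + \<alpha> * (\<gamma> / 2) * (A + norm wstar)
      = (1 - \<alpha> * \<gamma> / 2) * A + \<alpha> * L * \<delta> / real n * B + \<alpha> * \<gamma> / 2 * norm wstar"
    by (simp add: algebra_simps)
  ultimately show ?thesis
    unfolding A_def[symmetric] B_def[symmetric] by linarith
qed

lemma consensus_error_recursion: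
  assumes "sigmaW n E p \<le> 1"
  shows "pi_block_norm n p (deviation (Suc t))
    \<le> sigmaW n E p * pi_block_norm n p (deviation t)
      + \<alpha> * sigmaW n E p * L * (\<delta> * pi_block_norm n p (deviation t)
        + (\<delta> * pi_norm n p (\<lambda>i. 1 - real n * p i) + sqrt (\<Sum>j\<in>{1..n}. 1 / p j)) * norm (wbar t - wstar))
      + sigmaW n E p * \<alpha> * (L * \<delta> * pi_norm n p (\<lambda>i. 1 - real n * p i) * norm wstar
        + pi_block_norm n p (\<lambda>i. g i wstar))"
proof -
  define c1 where "c1 = pi_norm n p (\<lambda>i. 1 - real n * p i)"
  define S where "S = sqrt (\<Sum>j\<in>{1..n}. 1 / p j)"
  define A where "A = norm (wbar t - wstar)"
  define B where "B = pi_block_norm n p (deviation t)"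
  define Gw where "Gw = pi_block_norm n p (\<lambda>i. g i wstar)"
  have "norm (wbar t) \<le> A + norm wstar"
    using norm_triangle_sub[of "wbar t" wstar] unfolding A_def by (simp add: norm_minus_commute)
  then have "L * (\<delta> * (B + c1 * norm (wbar t)) + A * S) + Gw \<le> L * (\<delta> * (B + c1 * (A + norm wstar)) + A * S) + Gw"
    using L_pos delta_pos pi_norm_nonneg unfolding c1_def
    by (intro add_right_mono mult_left_mono add_mono) simp_all
  with gradient_pi_block_norm_le[OF assms, of t wstar]
  have "pi_block_norm n p (\<lambda>j. g j (z t j)) \<le> L * (\<delta> * (B + c1 * (A + norm wstar)) + A * S) + Gw"
    unfolding c1_def S_def A_def B_def Gw_def by (simp add: mult.commute)
  then have "sigmaW n E p * (B + \<alpha> * pi_block_norm n p (\<lambda>j. g j (z t j)))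
      \<le> sigmaW n E p * (B + \<alpha> * (L * (\<delta> * (B + c1 * (A + norm wstar)) + A * S) + Gw))"
    using \<alpha>_pos sigmaW_nonneg by (intro mult_left_mono add_left_mono) simp_all
  also have "\<dots> = sigmaW n E p * B + \<alpha> * sigmaW n E p * L * (\<delta> * B + (\<delta> * c1 + S) * A)
      + sigmaW n E p * \<alpha> * (L * \<delta> * c1 * norm wstar + Gw)"
    by (simp add: algebra_simps)
  finally show ?thesis
    using consensus_error_Suc_le[of t]
    unfolding c1_def[symmetric] S_def[symmetric] A_def[symmetric] B_def[symmetric] Gw_def[symmetric]
    by linarith
qed

lemma sqrt_sum_inverse_p_nonneg: "sqrt (\<Sum>j\<in>{1..n}. 1 / p j) \<ge> 0"
  by (intro real_sqrt_ge_zero sum_nonneg divide_nonneg_nonneg) (simp_all add: p_nonneg)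

lemma sigmaW_lt_1:
  assumes "b > 0"
    and "\<alpha> * (L * sigmaW n E p * (\<delta> * b + \<delta> * pi_norm n p (\<lambda>i. 1 - real n * p i)
      + sqrt (\<Sum>j\<in>{1..n}. 1 / p j))) < b * (1 - sigmaW n E p)"
  shows "sigmaW n E p < 1"
proof -
  have "0 \<le> \<alpha> * (L * sigmaW n E p * (\<delta> * b + \<delta> * pi_norm n p (\<lambda>i. 1 - real n * p i)
      + sqrt (\<Sum>j\<in>{1..n}. 1 / p j)))"
    using \<alpha>_pos L_pos delta_pos \<open>b > 0\<close> sigmaW_nonneg pi_norm_nonneg sqrt_sum_inverse_p_nonneg
    by (intro mult_nonneg_nonneg add_nonneg_nonneg) simp_all
  with assms(2) have "b * (1 - sigmaW n E p) > 0"
    by linarith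
  with \<open>b > 0\<close> show ?thesis
    by (simp add: zero_less_mult_iff)
qed

lemma error_bounds:
  fixes \<gamma> :: real and wstar :: 'a and t0 t :: nat
  defines "\<sigma> \<equiv> sigmaW n E p" and "c1 \<equiv> pi_norm n p (\<lambda>i. 1 - real n * p i)"
    and "S \<equiv> sqrt (\<Sum>j\<in>{1..n}. 1 / p j)" and "b \<equiv> real n * \<gamma> / (4 * L * \<delta>)"
  defines "D2 \<equiv> L * \<delta> * c1 * norm wstar + pi_block_norm n p (\<lambda>i. g i wstar)"
  defines "R \<equiv> Max {norm (wbar t0 - wstar), pi_block_norm n p (deviation t0) / b, 2 * norm wstar,
    \<sigma> * \<alpha> * D2 / (b * (1 - \<sigma>) - \<alpha> * L * \<sigma> * (\<delta> * b + \<delta> * c1 + S))}"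
  assumes contraction: "\<And>x. norm (x - \<alpha> *\<^sub>R ((1 / real n) *\<^sub>R (\<Sum>i\<in>{1..n}. g i x)) - wstar)
      \<le> (1 - \<alpha> * \<gamma>) * norm (x - wstar)"
    and "\<gamma> > 0"
    and step_size: "\<alpha> * (L * \<sigma> * (\<delta> * b + \<delta> * c1 + S)) < b * (1 - \<sigma>)"
    and t0: "L * \<delta> / real n * c1 * \<sigma> ^ t0 \<le> \<gamma> / 2"
    and "t0 \<le> t"
  shows "norm (wbar t - wstar) \<le> R \<and> pi_block_norm n p (deviation t) \<le> b * R"
proof -
  have "\<sigma> \<ge> 0" "c1 \<ge> 0" "S \<ge> 0"
    unfolding \<sigma>_def c1_def S_def by (rule sigmaW_nonneg pi_norm_nonneg sqrt_sum_inverse_p_nonneg)+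
  have "b > 0"
    unfolding b_def using n_pos L_pos delta_pos \<open>\<gamma> > 0\<close> by simp
  then have "\<sigma> < 1"
    using step_size unfolding \<sigma>_def c1_def S_def by (rule sigmaW_lt_1)
  have R: "norm (wbar t0 - wstar) \<le> R" "pi_block_norm n p (deviation t0) / b \<le> R" "2 * norm wstar \<le> R"
    "\<sigma> * \<alpha> * D2 / (b * (1 - \<sigma>) - \<alpha> * L * \<sigma> * (\<delta> * b + \<delta> * c1 + S)) \<le> R"
    unfolding R_def by (intro Max_ge; simp)+
  show ?thesis
  proof (rule affine_recursion_invariant[where A = "\<lambda>s. norm (wbar s - wstar)"
        and B = "\<lambda>s. pi_block_norm n p (deviation s)", OF _ _ _ _ _ _ R(1) _ _ _ \<open>t0 \<le> t\<close>])
    show "norm (wbar (Suc s) - wstar)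
        \<le> (1 - \<alpha> * \<gamma> / 2) * norm (wbar s - wstar) + \<alpha> * L * \<delta> / real n * pi_block_norm n p (deviation s)
          + \<alpha> * \<gamma> / 2 * norm wstar" if "t0 \<le> s" for s
      using average_error_recursion[OF contraction, of t0 s] t0 that \<open>\<gamma> > 0\<close> \<open>\<sigma> < 1\<close>
      unfolding \<sigma>_def c1_def by simp
    show "pi_block_norm n p (deviation (Suc s))
        \<le> \<alpha> * \<sigma> * L * (\<delta> * c1 + S) * norm (wbar s - wstar) + (\<sigma> + \<alpha> * \<sigma> * L * \<delta>) * pi_block_norm n p (deviation s)
          + \<sigma> * \<alpha> * D2" for s
      using consensus_error_recursion[of s wstar] \<open>\<sigma> < 1\<close>
      unfolding \<sigma>_def c1_def S_def D2_def by (simp add: algebra_simps)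
    show "pi_block_norm n p (deviation t0) \<le> b * R"
      using R(2) \<open>b > 0\<close> by (simp add: divide_le_eq mult.commute)
    have "\<alpha> * L * \<delta> / real n * (b * R) = \<alpha> * \<gamma> / 4 * R"
      unfolding b_def using n_pos L_pos delta_pos by (simp add: field_simps)
    moreover have "\<alpha> * \<gamma> / 4 * (2 * norm wstar) \<le> \<alpha> * \<gamma> / 4 * R"
      using R(3) \<alpha>_pos \<open>\<gamma> > 0\<close> by (intro mult_left_mono) simp_all
    ultimately show "(1 - \<alpha> * \<gamma> / 2) * R + \<alpha> * L * \<delta> / real n * (b * R) + \<alpha> * \<gamma> / 2 * norm wstar \<le> R"
      by (simp add: algebra_simps)
    have "\<sigma> * \<alpha> * D2 \<le> R * (b * (1 - \<sigma>) - \<alpha> * L * \<sigma> * (\<delta> * b + \<delta> * c1 + S))"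
      using R(4) step_size by (simp add: divide_le_eq algebra_simps)
    then show "\<alpha> * \<sigma> * L * (\<delta> * c1 + S) * R + (\<sigma> + \<alpha> * \<sigma> * L * \<delta>) * (b * R) + \<sigma> * \<alpha> * D2 \<le> b * R"
      by (simp add: algebra_simps)
    have "\<alpha> * \<gamma> \<le> 1"
      using contraction_factor_nonneg[OF contraction] by simp
    then show "0 \<le> 1 - \<alpha> * \<gamma> / 2"
      by simp
  qed (use \<alpha>_pos L_pos delta_pos \<open>\<sigma> \<ge> 0\<close> \<open>c1 \<ge> 0\<close> \<open>S \<ge> 0\<close> in simp_all)
qed

end

theorem theorem4p2:
  fixes n :: nat and E :: "(nat \<times> nat) set" and p :: "nat \<Rightarrow> real"
    and fs :: "nat \<Rightarrow> 'a::euclidean_space \<Rightarrow> real" and g :: "nat \<Rightarrow> 'a \<Rightarrow> 'a"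
    and Lc :: "nat \<Rightarrow> real" and \<beta> \<alpha> :: real and wstar :: 'a
    and w :: "nat \<Rightarrow> nat \<Rightarrow> 'a" and y :: "nat \<Rightarrow> nat \<Rightarrow> real" and t0 :: nat
    and f :: "'a \<Rightarrow> real" and L \<gamma> \<sigma> \<delta> b c1 S D2 :: real
    and wbar :: "nat \<Rightarrow> 'a" and A B :: "nat \<Rightarrow> real"
  assumes f_def: "f =  (\<lambda>x. (1 / real n) * (\<Sum>i\<in>{1..n}. fs i x))"
    and L_def: "L = Max (Lc ` {1..n})"
    and gamma_def: "\<gamma> = \<beta> * L / (\<beta> + L)"
    and sigma_def: "\<sigma> = sigmaW n E p"
    and delta_def: "\<delta> = (SUP t. Max ((\<lambda>i. 1 / y t i) ` {1..n}))"
    and wbar_def: "wbar = (\<lambda>t. (1 / real n) *\<^sub>R (\<Sum>i\<in>{1..n}. w t i))"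
    and A_def: "A = (\<lambda>t. norm (wbar t - wstar))"
    and B_def: "B = (\<lambda>t. pi_block_norm n p (\<lambda>i. w t i - (real n * p i) *\<^sub>R wbar t))"
    and b_def: "b = real n * \<gamma> / (4 * L * \<delta>)"
    and c1_def: "c1 = pi_norm n p (\<lambda>i. 1 - real n * p i)"
    and S_def: "S = sqrt (\<Sum>j\<in>{1..n}. 1 / p j)"
    and D2_def: "D2 = L * \<delta> * c1 * norm wstar + pi_block_norm n p (\<lambda>i. g i wstar)"
    and n_pos: "n \<ge> 1"
    and E_sub: "E \<subseteq> {1..n} \<times> {1..n}"
    and self_loops: "\<forall>i\<in>{1..n}. (i, i) \<in> E"
    and strong_conn: "strongly_connected_on n E"
    and p_stat: "\<forall>i\<in>{1..n}. (\<Sum>j\<in>{1..n}. Wmat E i j * p j) = p i"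
    and p_pos: "\<forall>i\<in>{1..n}. p i > 0"
    and p_sum: "(\<Sum>i\<in>{1..n}. p i) = 1"
    and grad: "\<forall>i\<in>{1..n}. \<forall>x. (fs i has_derivative (\<lambda>h. g i x \<bullet> h)) (at x)"
    and F1: "\<forall>i\<in>{1..n}. Lc i > 0 \<and> (\<forall>x x'. norm (g i x - g i x') \<le> Lc i * norm (x - x'))"
    and F2: "\<beta> > 0" "strongly_convex \<beta> f"
    and wstar_min: "\<forall>x. f wstar \<le> f x"
    and alpha_pos: "\<alpha> > 0"
    and y0: "\<forall>i\<in>{1..n}. y 0 i = 1"
    and y_step: "\<forall>t. \<forall>i\<in>{1..n}. y (Suc t) i = (\<Sum>j\<in>{1..n}. Wmat E i j * y t j)"
    and w_step: "\<forall>t. \<forall>i\<in>{1..n}. w (Suc t) i =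
        (\<Sum>j\<in>{1..n}. Wmat E i j *\<^sub>R (w t j - \<alpha> *\<^sub>R g j ((1 / y t j) *\<^sub>R w t j)))"
    and alpha_le: "\<alpha> \<le> 2 / (L + \<beta>)"
    and alpha_lt: "\<alpha> * (L * \<sigma> * (\<delta> * b + \<delta> * c1 + S)) < b * (1 - \<sigma>)"
    and t0_def: "(L * \<delta> / real n) * c1 * \<sigma> ^ t0 \<le> \<gamma> / 2"
  shows "bdd_above (range A) \<and> bdd_above (range B) \<and>
    (let R = Max {A t0, B t0 / b, 2 * norm wstar,
                  \<sigma> * \<alpha> * D2 / (b * (1 - \<sigma>) - \<alpha> * L * \<sigma> * (\<delta> * b + \<delta> * c1 + S))}
     in \<forall>t\<ge>t0. A t \<le> R \<and> B t \<le> b * R)"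
proof -
  interpret ps: push_sum n E y
    using n_pos E_sub self_loops y0 y_step by unfold_locales auto
  have Lc_le: "Lc i \<le> L" if "i \<in> {1..n}" for i
    unfolding L_def using that by (intro Max_ge) auto
  have "L > 0"
    using Lc_le[of 1] F1 n_pos by force
  have g_lip: "norm (g i x - g i x') \<le> L * norm (x - x')" if "i \<in> {1..n}" for i x x'
    using F1 that Lc_le[OF that] by (meson mult_right_mono norm_ge_zero order_trans)
  interpret gp: gradient_push n E y p g L \<alpha> \<delta> w
    using p_stat p_pos p_sum g_lip \<open>L > 0\<close> alpha_pos w_step ps.inverse_y_le_Sup[OF strong_conn]
    unfolding delta_def by unfold_locales auto
  have contraction: "norm (x - \<alpha> *\<^sub>R ((1 / real n) *\<^sub>R (\<Sum>i\<in>{1..n}. g i x)) - wstar)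
      \<le> (1 - \<alpha> * \<gamma>) * norm (x - wstar)" for x
    unfolding gamma_def
    by (rule average_gradient_step_contraction[OF n_pos _ g_lip \<open>L > 0\<close> F2(1) F2(2)[unfolded f_def]])
      (use grad wstar_min f_def alpha_pos alpha_le in auto)
  have "\<gamma> > 0"
    unfolding gamma_def using F2(1) \<open>L > 0\<close> by simp
  have A: "A t = norm (gp.wbar t - wstar)" and B: "B t = pi_block_norm n p (gp.deviation t)" for t
    unfolding A_def B_def wbar_def gp.wbar_def gp.deviation_def by simp_all
  define R where "R = Max {A t0, B t0 / b, 2 * norm wstar,
    \<sigma> * \<alpha> * D2 / (b * (1 - \<sigma>) - \<alpha> * L * \<sigma> * (\<delta> * b + \<delta> * c1 + S))}"
  have bound: "A t \<le> R \<and> B t \<le> b * R" if "t0 \<le> t" for t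
    using gp.error_bounds[OF contraction \<open>\<gamma> > 0\<close> alpha_lt[unfolded sigma_def c1_def S_def b_def]
        t0_def[unfolded sigma_def c1_def] that, folded sigma_def c1_def S_def b_def A B, folded D2_def]
    unfolding R_def .
  show ?thesis
    unfolding Let_def R_def[symmetric] using bound bdd_above_range_if_eventually_le by meson
qed

end
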